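(* Let $\Gamma$ and $\Lambda$ be finitely generated groups with polynomial growth of degree $b$ and $a$ respectively, where $b>a$. Then there is no $(\mathrm{L}^{a/b},\mathrm{L}^0)$ measure equivalence coupling from $\Gamma$ to $\Lambda$.
   Context: A finitely generated group has polynomial growth of degree $d$ if its volume growth $V(n)$ (the number of elements of word length at most $n$ for a finite generating set) satisfies $V(x)\approx x^d$, where $f\approx g$ means that there exist $C,C'>0$ with $f(x)=O(g(Cx))$ and $g(x)=O(f(C'x))$ as $x\to+\infty$. Measure equivalence coupling between countable groups $\Gamma,\Lambda$: a quadruple $(\Omega,X_\Gamma,X_\Lambda,\mu)$ where $(\Omega,\mu)$ is a standard Borel measure space with commuting, free, measure-preserving actions $\gamma\ast x$, $\lambda\ast x$ of $\Gamma$ and $\Lambda$, and $X_\Gamma$ (resp. $X_\Lambda$) is a Borel fundamental domain of finite measure for the $\Gamma$-action (resp. $\Lambda$-action). For $\gamma\in\Gamma$, $x\in X_\Lambda$, $\gamma\cdot x$ is the unique point of $(\Lambda\ast\gamma\ast x)\cap X_\Lambda$ and the cocycle $c_{\Lambda,\Gamma}\colon\Gamma\times X_\Lambda\to\Lambda$ is defined by $c_{\Lambda,\Gamma}(\gamma,x)\ast\gamma\ast x=\gamma\cdot x$. An $(\mathrm{L}^p,\mathrm{L}^0)$ measure equivalence coupling from $\Gamma$ to $\Lambda$ is one where, for every $\gamma\in\Gamma$, $x\mapsto|c_{\Lambda,\Gamma}(\gamma,x)|_{S_\Lambda}$ lies in $\mathrm{L}^p(X_\Lambda,\mu)$ ($|\cdot|_{S_\Lambda}$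 the word length for a finite generating set of $\Lambda$); no requirement is made on the other cocycle. *)

theory Defs
  imports "HOL-Analysis.Analysis" "HOL-Probability.Probability" "HOL-Algebra.Generated_Groups"
    "HOL-Library.Landau_Symbols"
begin

definition fin_gen_set :: "('a, 'c) monoid_scheme \<Rightarrow> 'a set \<Rightarrow> bool" where
  "fin_gen_set G S \<longleftrightarrow> finite S \<and> S \<subseteq> carrier G \<and> generate G S = carrier G"

definition word_len :: "('a, 'c) monoid_scheme \<Rightarrow> 'a set \<Rightarrow> 'a \<Rightarrow> nat" where
  "word_len G S g = (LEAST n. \<exists>xs. length xs = n \<and> set xs \<subseteq> S \<union> (\<lambda>s. inv\<^bsub>G\<^esub> s) ` S
                        \<and> foldr (\<lambda>x y. x \<otimes>\<^bsub>G\<^esub> y) xs \<one>\<^bsub>G\<^esub> = g)"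

definition growth :: "('a, 'c) monoid_scheme \<Rightarrow> 'a set \<Rightarrow> real \<Rightarrow> real" where
  "growth G S x = real (card {g \<in> carrier G. real (word_len G S g) \<le> x})"

definition asymp_dominated :: "(real \<Rightarrow> real) \<Rightarrow> (real \<Rightarrow> real) \<Rightarrow> bool" where
  "asymp_dominated f g \<longleftrightarrow> (\<exists>C>0. f \<in> O[at_top](\<lambda>x. g (C * x)))"

definition asymp_approx :: "(real \<Rightarrow> real) \<Rightarrow> (real \<Rightarrow> real) \<Rightarrow> bool" where
  "asymp_approx f g \<longleftrightarrow> asymp_dominated f g \<and> asymp_dominated g f"

definition poly_growth_deg :: "('a, 'c) monoid_scheme \<Rightarrow> real \<Rightarrow> bool" where
  "poly_growth_deg G d \<longleftrightarrow> (\<exists>S. fin_gen_set G S \<and> asymp_approx (growth G S) (\<lambda>x. x powr d))"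

text \<open>Standard Borel space: Borel isomorphic to a Borel subset of the real line
  (equivalently of a Polish space, by Kuratowski's theorem).\<close>
definition standard_borel :: "'w measure \<Rightarrow> bool" where
  "standard_borel M \<longleftrightarrow> (\<exists>(A::real set) f g. A \<in> sets borel \<and>
      f \<in> M \<rightarrow>\<^sub>M restrict_space borel A \<and> g \<in> restrict_space borel A \<rightarrow>\<^sub>M M \<and>
      (\<forall>x\<in>space M. g (f x) = x) \<and> (\<forall>y\<in>A. f (g y) = y))"

definition mp_action :: "('a, 'c) monoid_scheme \<Rightarrow> 'w measure \<Rightarrow> ('a \<Rightarrow> 'w \<Rightarrow> 'w) \<Rightarrow> bool" where
  "mp_action G M act \<longleftrightarrow>
     (\<forall>g\<in>carrier G. act g \<in> M \<rightarrow>\<^sub>M M \<and> distr M M (act g) = M) \<and>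
     (\<forall>w\<in>space M. act \<one>\<^bsub>G\<^esub> w = w) \<and>
     (\<forall>g\<in>carrier G. \<forall>h\<in>carrier G. \<forall>w\<in>space M. act (g \<otimes>\<^bsub>G\<^esub> h) w = act g (act h w))"

definition free_action :: "('a, 'c) monoid_scheme \<Rightarrow> 'w measure \<Rightarrow> ('a \<Rightarrow> 'w \<Rightarrow> 'w) \<Rightarrow> bool" where
  "free_action G M act \<longleftrightarrow> (\<forall>g\<in>carrier G. \<forall>w\<in>space M. act g w = w \<longrightarrow> g = \<one>\<^bsub>G\<^esub>)"

definition fund_domain :: "('a, 'c) monoid_scheme \<Rightarrow> 'w measure \<Rightarrow> ('a \<Rightarrow> 'w \<Rightarrow> 'w) \<Rightarrow> 'w set \<Rightarrow> bool" where
  "fund_domain G M act X \<longleftrightarrow> X \<in> sets M \<and> emeasure M X < \<infinity> \<and>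
     (\<forall>w\<in>space M. \<exists>!g. g \<in> carrier G \<and> act g w \<in> X)"

definition me_coupling ::
  "('a, 'c) monoid_scheme \<Rightarrow> ('b, 'd) monoid_scheme \<Rightarrow> 'w measure \<Rightarrow>
   ('a \<Rightarrow> 'w \<Rightarrow> 'w) \<Rightarrow> ('b \<Rightarrow> 'w \<Rightarrow> 'w) \<Rightarrow> 'w set \<Rightarrow> 'w set \<Rightarrow> bool" where
  "me_coupling G L M aG aL XG XL \<longleftrightarrow>
     standard_borel M \<and> emeasure M (space M) \<noteq> 0 \<and>
     mp_action G M aG \<and> free_action G M aG \<and>
     mp_action L M aL \<and> free_action L M aL \<and>
     (\<forall>g\<in>carrier G. \<forall>l\<in>carrier L. \<forall>w\<in>space M. aG g (aL l w) = aL l (aG g w)) \<and>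
     fund_domain G M aG XG \<and> fund_domain L M aL XL"

definition cocycle ::
  "('b, 'd) monoid_scheme \<Rightarrow> ('b \<Rightarrow> 'w \<Rightarrow> 'w) \<Rightarrow> ('a \<Rightarrow> 'w \<Rightarrow> 'w) \<Rightarrow> 'w set \<Rightarrow> 'a \<Rightarrow> 'w \<Rightarrow> 'b" where
  "cocycle L aL aG XL g x = (THE l. l \<in> carrier L \<and> aL l (aG g x) \<in> XL)"

text \<open>L^p for 0 \<le> p (quasi-norm for p < 1); L^0 = measurable functions.\<close>
definition in_Lp :: "'w measure \<Rightarrow> real \<Rightarrow> ('w \<Rightarrow> real) \<Rightarrow> bool" where
  "in_Lp M p f \<longleftrightarrow> f \<in> borel_measurable M \<and>
     (p > 0 \<longrightarrow> (\<integral>\<^sup>+ x. ennreal (\<bar>f x\<bar> powr p) \<partial>M) < \<infinity>)"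

definition Lp_L0_coupling ::
  "('a, 'c) monoid_scheme \<Rightarrow> ('b, 'd) monoid_scheme \<Rightarrow> 'b set \<Rightarrow> real \<Rightarrow> 'w measure \<Rightarrow>
   ('a \<Rightarrow> 'w \<Rightarrow> 'w) \<Rightarrow> ('b \<Rightarrow> 'w \<Rightarrow> 'w) \<Rightarrow> 'w set \<Rightarrow> 'w set \<Rightarrow> bool" where
  "Lp_L0_coupling G L S p M aG aL XG XL \<longleftrightarrow>
     me_coupling G L M aG aL XG XL \<and>
     (\<forall>g\<in>carrier G. in_Lp (restrict_space M XL) p
        (\<lambda>x. real (word_len L S (cocycle L aL aG XL g x))))"

end

theory Submission
  imports Defs
begin

text \<open>
  Pick d \<in> G such that the overlap {x \<in> XL. d x \<in> XG} has positive measure m. If every g in a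
  finite F \<subseteq> G moves at least half of the overlap into XL by elements of a finite E \<subseteq> L, then
  card F * m / 2 \<le> card E * \<mu>(XL): for fixed l \<in> E, the parts of the overlap that l g moves into
  XL are carried, for distinct g, to disjoint subsets of XL by measure preserving maps.

  For g of word length at most n, the cocycle identity writes c(g, x) as a product of at most n
  cocycle values of generators, evaluated along the measure preserving induced action on XL, so
  each factor has the distribution of the cocycle of a generator, whose length is in L^p with
  p = a/b. Markov's inequality applied to truncations then shows that for large n the length of
  c(g, x) exceeds \<delta> n^(1/p) only on a set of measure less than m/2. Taking for F and E the balls
  of radii n and \<delta> n^(b/a), the counting bound gives
  \<kappa> n^b \<le> V_G(n) \<le> Q V_L(\<delta> n^(b/a)) \<le> Q K \<delta>^a n^b with Q independent of \<delta>, which fails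
  for small \<delta>. If a = 0 then L is finite, and the counting bound with E = L makes G finite,
  contradicting b > 0.
\<close>


definition word_prod :: "('a, 'c) monoid_scheme \<Rightarrow> 'a list \<Rightarrow> 'a" where
  "word_prod G ws = foldr (\<lambda>x y. x \<otimes>\<^bsub>G\<^esub> y) ws \<one>\<^bsub>G\<^esub>"

definition sym_gens :: "('a, 'c) monoid_scheme \<Rightarrow> 'a set \<Rightarrow> 'a set" where
  "sym_gens G S = S \<union> (\<lambda>s. inv\<^bsub>G\<^esub> s) ` S"

lemma word_len_eq_Least:
  "word_len G S g = (LEAST n. \<exists>ws. length ws = n \<and> set ws \<subseteq> sym_gens G S \<and> word_prod G ws = g)"
  unfolding word_len_def sym_gens_def word_prod_def by simp

lemma growth_nonneg: "growth G S r \<ge> 0"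
  unfolding growth_def by simp

context group
begin

lemma word_prod_Nil [simp]: "word_prod G [] = \<one>"
  by (simp add: word_prod_def)

lemma word_prod_Cons [simp]: "word_prod G (x # xs) = x \<otimes> word_prod G xs"
  by (simp add: word_prod_def)

lemma word_prod_closed: "set ws \<subseteq> carrier G \<Longrightarrow> word_prod G ws \<in> carrier G"
  by (induction ws) auto

lemma word_prod_append:
  "set ws \<subseteq> carrier G \<Longrightarrow> set vs \<subseteq> carrier G \<Longrightarrow> word_prod G (ws @ vs) = word_prod G ws \<otimes> word_prod G vs"
  by (induction ws) (auto simp: m_assoc word_prod_closed)

lemma sym_gens_subset_carrier: "S \<subseteq> carrier G \<Longrightarrow> sym_gens G S \<subseteq> carrier G"
  unfolding sym_gens_def by auto

lemma finite_sym_gens: "finite S \<Longrightarrow> finite (sym_gens G S)"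
  unfolding sym_gens_def by auto

lemma generate_imp_word:
  assumes "S \<subseteq> carrier G" "g \<in> generate G S"
  shows "\<exists>ws. set ws \<subseteq> sym_gens G S \<and> word_prod G ws = g"
  using assms(2)
proof (induction rule: generate.induct)
  case one
  show ?case by (intro exI[of _ "[]"]) auto
next
  case (incl h)
  then show ?case using assms(1) by (intro exI[of _ "[h]"]) (auto simp: sym_gens_def)
next
  case (inv h)
  then show ?case using assms(1) by (intro exI[of _ "[inv h]"]) (auto simp: sym_gens_def)
next
  case (eng h1 h2)
  then obtain w1 w2 where "set w1 \<subseteq> sym_gens G S" "word_prod G w1 = h1"
      "set w2 \<subseteq> sym_gens G S" "word_prod G w2 = h2"
    by blast
  then show ?case using sym_gens_subset_carrier[OF assms(1)]
    by (intro exI[of _ "w1 @ w2"]) (auto simp: word_prod_append)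
qed

lemma word_len_witness:
  assumes "fin_gen_set G S" "g \<in> carrier G"
  obtains ws where "length ws = word_len G S g" "set ws \<subseteq> sym_gens G S" "word_prod G ws = g"
proof -
  have "\<exists>n ws. length ws = n \<and> set ws \<subseteq> sym_gens G S \<and> word_prod G ws = g"
    using assms generate_imp_word unfolding fin_gen_set_def by blast
  from LeastI_ex[OF this] show ?thesis
    using that unfolding word_len_eq_Least by blast
qed

lemma word_len_word_prod_le: "set ws \<subseteq> sym_gens G S \<Longrightarrow> word_len G S (word_prod G ws) \<le> length ws"
  unfolding word_len_eq_Least by (intro Least_le) blast

lemma word_len_one [simp]: "word_len G S \<one> = 0"
  using word_len_word_prod_le[of "[]" S] by simp

lemma word_len_mult_le:
  assumes "fin_gen_set G S" "g \<in> carrier G" "h \<in> carrier G"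
  shows "word_len G S (g \<otimes> h) \<le> word_len G S g + word_len G S h"
proof -
  have gens: "sym_gens G S \<subseteq> carrier G"
    using assms(1) sym_gens_subset_carrier unfolding fin_gen_set_def by auto
  obtain u where u: "length u = word_len G S g" "set u \<subseteq> sym_gens G S" "word_prod G u = g"
    using word_len_witness assms by blast
  obtain v where v: "length v = word_len G S h" "set v \<subseteq> sym_gens G S" "word_prod G v = h"
    using word_len_witness assms by blast
  have "word_prod G (u @ v) = g \<otimes> h"
    using u v gens by (simp add: word_prod_append)
  then show ?thesis
    using word_len_word_prod_le[of "u @ v" S] u v by simp
qed

lemma finite_word_ball:
  assumes "fin_gen_set G S"
  shows "finite {g \<in> carrier G. real (word_len G S g) \<le> r}"
proof -
  have "{g \<in> carrier G. real (word_len G S g) \<le> r} \<subseteq>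
        word_prod G ` {ws. set ws \<subseteq> sym_gens G S \<and> length ws \<le> nat \<lfloor>r\<rfloor>}"
  proof
    fix g assume "g \<in> {g \<in> carrier G. real (word_len G S g) \<le> r}"
    then have g: "g \<in> carrier G" "real (word_len G S g) \<le> r" by auto
    obtain ws where "length ws = word_len G S g" "set ws \<subseteq> sym_gens G S" "word_prod G ws = g"
      using word_len_witness assms g(1) by blast
    moreover have "length ws \<le> nat \<lfloor>r\<rfloor>"
      using g(2) calculation(1) by (simp add: le_nat_floor)
    ultimately show "g \<in> word_prod G ` {ws. set ws \<subseteq> sym_gens G S \<and> length ws \<le> nat \<lfloor>r\<rfloor>}"
      by blast
  qed
  moreover have "finite {ws. set ws \<subseteq> sym_gens G S \<and> length ws \<le> nat \<lfloor>r\<rfloor>}"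
    using assms finite_lists_length_le finite_sym_gens unfolding fin_gen_set_def by blast
  ultimately show ?thesis
    using finite_subset by blast
qed

lemma countable_carrier:
  assumes "fin_gen_set G S"
  shows "countable (carrier G)"
proof -
  have "carrier G = (\<Union>n::nat. {g \<in> carrier G. real (word_len G S g) \<le> real n})"
    by (auto intro: exI[of _ "word_len G S _"])
  also have "countable \<dots>"
  proof (rule countable_UN)
    fix n :: nat
    show "countable {g \<in> carrier G. real (word_len G S g) \<le> real n}"
      by (rule countable_finite[OF finite_word_ball[OF assms]])
  qed simp
  finally show ?thesis .
qed

lemma word_len_le_const_mult:
  assumes S: "fin_gen_set G S" and S': "fin_gen_set G S'"
  obtains D :: nat where "D > 0" "\<And>g. g \<in> carrier G \<Longrightarrow> word_len G S' g \<le> D * word_len G S g"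
proof -
  define D where "D = Max (insert 1 (word_len G S' ` sym_gens G S))"
  have fin: "finite (sym_gens G S)" and gens: "sym_gens G S \<subseteq> carrier G"
    using S finite_sym_gens sym_gens_subset_carrier unfolding fin_gen_set_def by auto
  have "D > 0"
    unfolding D_def using fin by (metis Max_ge finite_imageI finite_insert insertI1 not_one_le_zero neq0_conv)
  have gen_le: "word_len G S' s \<le> D" if "s \<in> sym_gens G S" for s
    unfolding D_def using fin that by (intro Max_ge) auto
  have word_le: "word_len G S' (word_prod G ws) \<le> D * length ws" if "set ws \<subseteq> sym_gens G S" for ws
    using that
  proof (induction ws)
    case Nil
    then show ?case by simp
  next
    case (Cons x ws)
    have "word_len G S' (word_prod G (x # ws)) \<le> word_len G S' x + word_len G S' (word_prod G ws)"
      using Cons.prems gens word_prod_closed by (simp add: word_len_mult_le[OF S'] subset_iff)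
    also have "\<dots> \<le> D + D * length ws"
      using gen_le Cons by (intro add_mono) auto
    finally show ?case by simp
  qed
  show ?thesis
  proof (rule that[OF \<open>D > 0\<close>])
    fix g assume "g \<in> carrier G"
    then obtain ws where "length ws = word_len G S g" "set ws \<subseteq> sym_gens G S" "word_prod G ws = g"
      using word_len_witness S by blast
    then show "word_len G S' g \<le> D * word_len G S g"
      using word_le by metis
  qed
qed

lemma growth_ge_one:
  assumes "fin_gen_set G S" "r \<ge> 0"
  shows "growth G S r \<ge> 1"
proof -
  have "\<one> \<in> {g \<in> carrier G. real (word_len G S g) \<le> r}"
    using assms by simp
  then have "card {g \<in> carrier G. real (word_len G S g) \<le> r} \<noteq> 0"
    using finite_word_ball[OF assms(1)] by auto
  then show ?thesis
    unfolding growth_def by simp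
qed

lemma growth_mono:
  assumes "fin_gen_set G S" "r \<le> r'"
  shows "growth G S r \<le> growth G S r'"
  unfolding growth_def using assms finite_word_ball[OF assms(1)]
  by (intro of_nat_mono card_mono) auto

lemma growth_le_growth_rescaled:
  assumes S: "fin_gen_set G S" and S': "fin_gen_set G S'"
    and D: "\<And>g. g \<in> carrier G \<Longrightarrow> word_len G S' g \<le> D * word_len G S g" and r: "r \<ge> 0"
  shows "growth G S r \<le> growth G S' (real D * r)"
proof -
  have "{g \<in> carrier G. real (word_len G S g) \<le> r} \<subseteq> {g \<in> carrier G. real (word_len G S' g) \<le> real D * r}"
  proof safe
    fix g assume g: "g \<in> carrier G" "real (word_len G S g) \<le> r"
    have "real (word_len G S' g) \<le> real D * real (word_len G S g)"
      using D[OF g(1)] by (metis of_nat_le_iff of_nat_mult)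
    also have "\<dots> \<le> real D * r"
      using g by (intro mult_left_mono) auto
    finally show "real (word_len G S' g) \<le> real D * r" .
  qed
  then show ?thesis
    unfolding growth_def using finite_word_ball[OF S'] by (simp add: card_mono)
qed

lemma finite_carrier_if_growth_bounded:
  assumes S: "fin_gen_set G S" and bound: "\<And>r. r \<ge> R \<Longrightarrow> growth G S r \<le> K"
  shows "finite (carrier G)"
proof (rule ccontr)
  assume "infinite (carrier G)"
  then obtain B where B: "finite B" "card B = nat \<lceil>K\<rceil> + 1" "B \<subseteq> carrier G"
    using infinite_arbitrarily_large by blast
  define r where "r = max R (\<Sum>g\<in>B. real (word_len G S g))"
  have "B \<subseteq> {g \<in> carrier G. real (word_len G S g) \<le> r}"
  proof
    fix g assume "g \<in> B"
    then have "real (word_len G S g) \<le> (\<Sum>g\<in>B. real (word_len G S g))"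
      using B(1) by (intro member_le_sum) auto
    then show "g \<in> {g \<in> carrier G. real (word_len G S g) \<le> r}"
      using \<open>g \<in> B\<close> B(3) unfolding r_def by auto
  qed
  then have "real (card B) \<le> growth G S r"
    unfolding growth_def using finite_word_ball[OF S] card_mono by (metis of_nat_le_iff)
  also have "\<dots> \<le> K"
    using bound unfolding r_def by simp
  finally show False
    using B(2) by linarith
qed

end

lemma poly_growth_deg_lower_bound:
  assumes "poly_growth_deg G b"
  obtains S \<kappa> where "fin_gen_set G S" "\<kappa> > 0"
    "\<forall>\<^sub>F n in sequentially. \<kappa> * real n powr b \<le> growth G S (real n)"
proof -
  obtain S C where S: "fin_gen_set G S" and C: "C > 0" "(\<lambda>x. x powr b) \<in> O[at_top](\<lambda>x. growth G S (C * x))"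
    using assms unfolding poly_growth_deg_def asymp_approx_def asymp_dominated_def by blast
  obtain k where k: "k > 0" "\<forall>\<^sub>F x in at_top. norm (x powr b) \<le> k * norm (growth G S (C * x))"
    using C(2) by (elim landau_o.bigE) auto
  have "filterlim (\<lambda>n. real n / C) at_top sequentially"
    using filterlim_tendsto_pos_mult_at_top[OF tendsto_const[of "inverse C"] _ filterlim_real_sequentially] C
    by (simp add: divide_inverse mult.commute)
  from eventually_compose_filterlim[OF k(2) this]
  have "\<forall>\<^sub>F n in sequentially. 1 / (k * C powr b) * real n powr b \<le> growth G S (real n)"
  proof eventually_elim
    case (elim n)
    then have "real n powr b / C powr b \<le> k * growth G S (real n)"
      using C growth_nonneg[of G S] by (simp add: powr_divide)
    then show ?case
      using k C by (simp add: field_simps)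
  qed
  moreover have "1 / (k * C powr b) > 0"
    using k C by simp
  ultimately show ?thesis
    using that S by blast
qed

lemma poly_growth_deg_upper_bound:
  assumes "group G" "poly_growth_deg G a" "fin_gen_set G S"
  obtains \<kappa> R where "\<kappa> > 0" "\<And>r. r \<ge> R \<Longrightarrow> growth G S r \<le> \<kappa> * r powr a"
proof -
  interpret group G by fact
  obtain S' C where S': "fin_gen_set G S'" and C: "C > 0" "growth G S' \<in> O[at_top](\<lambda>x. (C * x) powr a)"
    using assms(2) unfolding poly_growth_deg_def asymp_approx_def asymp_dominated_def by blast
  obtain k where k: "k > 0" "\<forall>\<^sub>F x in at_top. norm (growth G S' x) \<le> k * norm ((C * x) powr a)"
    using C(2) by (elim landau_o.bigE) auto
  then obtain R where "\<And>x. x \<ge> R \<Longrightarrow> norm (growth G S' x) \<le> k * norm ((C * x) powr a)"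
    by (auto simp: eventually_at_top_linorder)
  then have R: "growth G S' x \<le> k * (C * x) powr a" if "x \<ge> R" for x
    using that by fastforce
  obtain D :: nat where D: "D > 0" "\<And>g. g \<in> carrier G \<Longrightarrow> word_len G S' g \<le> D * word_len G S g"
    using word_len_le_const_mult[OF assms(3) S'] by blast
  show ?thesis
  proof (rule that)
    show "k * (C * real D) powr a > 0"
      using k C D by simp
    fix r assume r: "r \<ge> max R 1"
    have "r \<le> real D * r"
      using D(1) r by (simp add: mult_le_cancel_right1)
    then have "R \<le> real D * r"
      using r by linarith
    then have "growth G S' (real D * r) \<le> k * (C * (real D * r)) powr a"
      by (rule R)
    then have "growth G S r \<le> k * (C * (real D * r)) powr a"
      using growth_le_growth_rescaled[OF assms(3) S' D(2), of r] r by simp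
    also have "\<dots> = k * (C * real D) powr a * r powr a"
      using C r by (simp add: powr_mult)
    finally show "growth G S r \<le> k * (C * real D) powr a * r powr a" .
  qed
qed

lemma poly_growth_deg_nonneg:
  assumes "group G" "poly_growth_deg G a"
  shows "a \<ge> 0"
proof (rule ccontr)
  assume "\<not> a \<ge> 0"
  obtain S where S: "fin_gen_set G S"
    using assms(2) unfolding poly_growth_deg_def by blast
  obtain \<kappa> R where \<kappa>: "\<kappa> > 0" "\<And>r. r \<ge> R \<Longrightarrow> growth G S r \<le> \<kappa> * r powr a"
    using poly_growth_deg_upper_bound[OF assms S] by blast
  have "((\<lambda>r. \<kappa> * r powr a) \<longlongrightarrow> \<kappa> * 0) at_top"
    using \<open>\<not> a \<ge> 0\<close> by (intro tendsto_mult tendsto_const tendsto_neg_powr filterlim_ident) auto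
  then have "\<forall>\<^sub>F r in at_top. \<kappa> * r powr a < 1 \<and> r \<ge> max R 0"
    by (intro eventually_conj order_tendstoD(2) eventually_ge_at_top) auto
  then obtain r where r: "\<kappa> * r powr a < 1" "r \<ge> R" "r \<ge> 0"
    by (auto simp: eventually_at_top_linorder)
  have "1 \<le> growth G S r"
    using group.growth_ge_one[OF assms(1) S r(3)] .
  also have "\<dots> \<le> \<kappa> * r powr a"
    using \<kappa>(2) r(2) .
  finally show False
    using r(1) by simp
qed

lemma poly_growth_deg_zero_imp_finite:
  assumes "group G" "poly_growth_deg G 0"
  shows "finite (carrier G)"
proof -
  obtain S where S: "fin_gen_set G S"
    using assms(2) unfolding poly_growth_deg_def by blast
  obtain \<kappa> R where \<kappa>: "\<And>r. r \<ge> R \<Longrightarrow> growth G S r \<le> \<kappa> * r powr 0"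
    using poly_growth_deg_upper_bound[OF assms S] by blast
  have "growth G S r \<le> \<kappa>" if "r \<ge> max R 1" for r
    using \<kappa>[of r] that by simp
  then show ?thesis
    using group.finite_carrier_if_growth_bounded[OF assms(1) S] by blast
qed

lemma poly_growth_deg_pos_imp_infinite:
  assumes "poly_growth_deg G b" "b > 0"
  shows "infinite (carrier G)"
proof
  assume fin: "finite (carrier G)"
  obtain S \<kappa> where "\<kappa> > 0"
    and lower: "\<forall>\<^sub>F n in sequentially. \<kappa> * real n powr b \<le> growth G S (real n)"
    using poly_growth_deg_lower_bound[OF assms(1)] by blast
  have "growth G S r \<le> real (card (carrier G))" for r
    unfolding growth_def using fin by (intro of_nat_mono card_mono) auto
  moreover have "filterlim (\<lambda>n. \<kappa> * real n powr b) at_top sequentially"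
    using assms(2) \<open>\<kappa> > 0\<close>
    by (intro filterlim_tendsto_pos_mult_at_top[OF tendsto_const]
        filterlim_compose[OF real_powr_at_top filterlim_real_sequentially])
  then have "\<forall>\<^sub>F n in sequentially. real (card (carrier G)) < \<kappa> * real n powr b"
    by (simp add: filterlim_at_top_dense)
  then have "\<forall>\<^sub>F n in sequentially. real (card (carrier G)) < \<kappa> * real n powr b
      \<and> \<kappa> * real n powr b \<le> growth G S (real n)"
    using lower by (rule eventually_conj)
  then obtain n where "real (card (carrier G)) < \<kappa> * real n powr b"
      "\<kappa> * real n powr b \<le> growth G S (real n)"
    by (auto simp: eventually_sequentially)
  ultimately show False
    by (meson not_le order.trans)
qed

lemma rescaled_polynomial_growth_contradiction:
  fixes VG VL :: "real \<Rightarrow> real"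
  assumes ab: "0 < a" "a < b" and pos: "\<kappa> > 0" "Q > 0" "K > 0"
    and lower: "\<forall>\<^sub>F n in sequentially. \<kappa> * real n powr b \<le> VG (real n)"
    and upper: "\<And>r. r \<ge> R \<Longrightarrow> VL r \<le> K * r powr a"
    and dom: "\<And>\<delta>. \<delta> > 0 \<Longrightarrow> \<forall>\<^sub>F n in sequentially. VG (real n) \<le> Q * VL (\<delta> * real n powr (b / a))"
  shows False
proof -
  define \<delta> where "\<delta> = (\<kappa> / (2 * Q * K)) powr (1 / a)"
  have \<delta>: "\<delta> > 0" "Q * K * \<delta> powr a = \<kappa> / 2"
    using ab pos unfolding \<delta>_def by (simp_all add: powr_powr)
  have "filterlim (\<lambda>n. \<delta> * real n powr (b / a)) at_top sequentially"
    using ab \<delta>(1) by (intro filterlim_tendsto_pos_mult_at_top[OF tendsto_const]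
        filterlim_compose[OF real_powr_at_top filterlim_real_sequentially]) auto
  then have "\<forall>\<^sub>F n in sequentially. R \<le> \<delta> * real n powr (b / a)"
    unfolding filterlim_at_top by (rule spec)
  then have "\<forall>\<^sub>F n in sequentially. False"
    using lower dom[OF \<delta>(1)] eventually_ge_at_top[of 1]
  proof eventually_elim
    case (elim n)
    have "VL (\<delta> * real n powr (b / a)) \<le> K * (\<delta> * real n powr (b / a)) powr a"
      using upper elim(1) .
    then have "Q * VL (\<delta> * real n powr (b / a)) \<le> Q * (K * (\<delta> * real n powr (b / a)) powr a)"
      using pos(2) by simp
    then have "\<kappa> * real n powr b \<le> Q * (K * (\<delta> * real n powr (b / a)) powr a)"
      using elim(2,3) by linarith
    also have "\<dots> = Q * K * \<delta> powr a * real n powr b"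
      using ab \<delta>(1) by (simp add: powr_mult powr_powr)
    also have "\<dots> = \<kappa> / 2 * real n powr b"
      using \<delta>(2) by simp
    finally show False
      using pos(1) elim(4) by simp
  qed
  then show False
    by simp
qed

lemma sum_of_bool_less_eq_min: "(\<Sum>k<N. of_bool (k < m)) = (of_nat (min m N) :: 'a::semiring_1)"
proof -
  have "{..<N} \<inter> {k. k < m} = {..<min m N}"
    by auto
  then show ?thesis
    by (simp add: sum_of_bool_eq)
qed

lemma min_le_add_powr:
  fixes m N L :: nat and p :: real
  assumes "0 \<le> p" "p \<le> 1"
  shows "real (min m N) \<le> real L + (if L < m then real N powr (1 - p) * real m powr p else 0)"
proof (cases "L < m")
  case False
  then show ?thesis by auto
next
  case True
  have "real (min m N) \<le> real N powr (1 - p) * real m powr p"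
  proof (cases "m \<le> N")
    case True
    have "real m = real m powr p * real m powr (1 - p)"
      using \<open>L < m\<close> by (simp add: powr_add[symmetric])
    also have "\<dots> \<le> real m powr p * real N powr (1 - p)"
      using True assms by (intro mult_left_mono powr_mono2) auto
    finally show ?thesis
      using True by (simp add: mult.commute)
  next
    case False
    have "real N \<le> real N powr p * real N powr (1 - p)"
      by (cases "N = 0") (simp_all add: powr_add[symmetric])
    also have "\<dots> \<le> real m powr p * real N powr (1 - p)"
      using False assms by (intro mult_right_mono powr_mono2) auto
    finally show ?thesis
      using False by (simp add: mult.commute)
  qed
  then show ?thesis
    using True by simp
qed

(* Markov's inequality, applied to the sum over i of min (f i x) N, bounds the measure of
   {N < \<Sum>i. f i} by the sum over i of this quantity. *)
definition tail_mass :: "'a measure \<Rightarrow> ('a \<Rightarrow> nat) \<Rightarrow> nat \<Rightarrow> real" where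
  "tail_mass M f N = measure M {x \<in> space M. N < f x}
     + (\<Sum>k<N. measure M {x \<in> space M. k < f x}) / real N"

lemma sets_Collect_count_space:
  assumes "f \<in> M \<rightarrow>\<^sub>M count_space UNIV"
  shows "{x \<in> space M. P (f x)} \<in> sets M"
proof -
  have "{x \<in> space M. P (f x)} = f -` {y. P y} \<inter> space M"
    by auto
  then show ?thesis
    using measurable_sets[OF assms, of "{y. P y}"] by simp
qed

lemma tail_mass_nonneg: "tail_mass M f N \<ge> 0"
  unfolding tail_mass_def by (intro add_nonneg_nonneg divide_nonneg_nonneg sum_nonneg) auto

context finite_measure
begin

lemma integrable_min_count_space:
  assumes "f \<in> M \<rightarrow>\<^sub>M count_space UNIV"
  shows "integrable M (\<lambda>x. real (min (f x) N))"
proof (rule integrable_const_bound)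
  show "AE x in M. norm (real (min (f x) N)) \<le> real N"
    by simp
  show "(\<lambda>x. real (min (f x) N)) \<in> borel_measurable M"
    using assms by (rule measurable_compose) simp
qed

lemma integral_min_eq_sum_measure_gt:
  assumes f: "f \<in> M \<rightarrow>\<^sub>M count_space UNIV"
  shows "(\<integral>x. real (min (f x) N) \<partial>M) = (\<Sum>k<N. measure M {x \<in> space M. k < f x})"
proof -
  have sets: "{x \<in> space M. k < f x} \<in> sets M" for k
    using f by (rule sets_Collect_count_space)
  have "(\<integral>x. real (min (f x) N) \<partial>M) = (\<integral>x. (\<Sum>k<N. indicator {x \<in> space M. k < f x} x) \<partial>M)"
    by (intro Bochner_Integration.integral_cong)
      (simp_all add: indicator_def of_bool_def[symmetric] sum_of_bool_less_eq_min)
  also have "\<dots> = (\<Sum>k<N. measure M {x \<in> space M. k < f x})"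
    using sets by (simp add: less_top[symmetric] emeasure_finite)
  finally show ?thesis .
qed

lemma measure_le_sum_tail_mass:
  assumes I: "finite I" and N: "N > 0" and f: "\<And>i. i \<in> I \<Longrightarrow> f i \<in> M \<rightarrow>\<^sub>M count_space UNIV"
    and A: "A \<subseteq> {x \<in> space M. N < (\<Sum>i\<in>I. f i x)}"
  shows "measure M A \<le> (\<Sum>i\<in>I. tail_mass M (f i) N)"
proof -
  define B where "B i = {x \<in> space M. N < f i x}" for i
  define h where "h x = (\<Sum>i\<in>I. real (min (f i x) N))" for x
  define C where "C = {x \<in> space M. real N \<le> h x}"
  have B_sets: "B i \<in> sets M" if "i \<in> I" for i
    unfolding B_def using f[OF that] by (rule sets_Collect_count_space)
  have h_int: "integrable M h"
    unfolding h_def using f by (intro Bochner_Integration.integrable_sum integrable_min_count_space)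
  have C_sets: "C \<in> sets M"
    unfolding C_def using borel_measurable_integrable[OF h_int] by measurable
  have "measure M C \<le> integral\<^sup>L M h / real N"
    unfolding C_def using N
    by (intro integral_Markov_inequality_measure[OF h_int]) (auto simp: h_def intro!: sum_nonneg)
  also have "integral\<^sup>L M h = (\<Sum>i\<in>I. \<Sum>k<N. measure M {x \<in> space M. k < f i x})"
    unfolding h_def using f
    by (simp add: Bochner_Integration.integral_sum integrable_min_count_space integral_min_eq_sum_measure_gt)
  finally have C_le: "measure M C \<le> (\<Sum>i\<in>I. \<Sum>k<N. measure M {x \<in> space M. k < f i x}) / real N" .
  have "A \<subseteq> (\<Union>i\<in>I. B i) \<union> C"
  proof
    fix x assume "x \<in> A"
    then have x: "x \<in> space M" "N < (\<Sum>i\<in>I. f i x)"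
      using A by auto
    show "x \<in> (\<Union>i\<in>I. B i) \<union> C"
    proof (cases "\<exists>i\<in>I. N < f i x")
      case False
      then have "h x = real (\<Sum>i\<in>I. f i x)"
        unfolding h_def by (simp add: min_absorb1 not_less)
      then show ?thesis
        using x unfolding C_def by (simp del: of_nat_sum)
    qed (use x in \<open>auto simp: B_def\<close>)
  qed
  then have "measure M A \<le> measure M ((\<Union>i\<in>I. B i) \<union> C)"
    using B_sets C_sets I by (intro finite_measure_mono) (auto intro!: sets.Un sets.finite_UN)
  also have "\<dots> \<le> (\<Sum>i\<in>I. measure M (B i)) + measure M C"
    using B_sets C_sets I
    by (intro order.trans[OF measure_Un_le] add_mono measure_UNION_le) (auto intro!: sets.finite_UN)
  also have "\<dots> \<le> (\<Sum>i\<in>I. tail_mass M (f i) N)"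
    using C_le unfolding tail_mass_def B_def by (simp add: sum.distrib sum_divide_distrib)
  finally show ?thesis .
qed

lemma tail_mass_comp_measure_preserving:
  assumes T: "T \<in> M \<rightarrow>\<^sub>M M" "distr M M T = M" and f: "f \<in> M \<rightarrow>\<^sub>M count_space UNIV"
  shows "tail_mass M (\<lambda>x. f (T x)) N = tail_mass M f N"
proof -
  have "measure M {x \<in> space M. k < f (T x)} = measure M {x \<in> space M. k < f x}" for k
  proof -
    have "{x \<in> space M. k < f (T x)} = T -` {x \<in> space M. k < f x} \<inter> space M"
      using measurable_space[OF T(1)] by auto
    also have "measure M \<dots> = measure (distr M M T) {x \<in> space M. k < f x}"
      using T f by (intro measure_distr[symmetric] sets_Collect_count_space) auto
    finally show ?thesis
      using T(2) by simp
  qed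
  then show ?thesis
    unfolding tail_mass_def by simp
qed

abbreviation truncated_moment :: "('a \<Rightarrow> nat) \<Rightarrow> real \<Rightarrow> nat \<Rightarrow> real" where
  "truncated_moment f p L \<equiv> \<integral>x. real (f x) powr p * indicator {x \<in> space M. L < f x} x \<partial>M"

lemma truncated_moment_tendsto_zero:
  assumes f: "f \<in> M \<rightarrow>\<^sub>M count_space UNIV" and int: "integrable M (\<lambda>x. real (f x) powr p)"
  shows "(\<lambda>L. truncated_moment f p L) \<longlonglongrightarrow> 0"
proof -
  have "(\<lambda>L. truncated_moment f p L) \<longlonglongrightarrow> integral\<^sup>L M (\<lambda>x. 0)"
  proof (rule integral_dominated_convergence[OF _ _ int])
    show "(\<lambda>x. real (f x) powr p * indicator {x \<in> space M. L < f x} x) \<in> borel_measurable M" for L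
      using f by measurable
    show "AE x in M. (\<lambda>L. real (f x) powr p * indicator {x \<in> space M. L < f x} x) \<longlonglongrightarrow> 0"
    proof (rule AE_I2)
      fix x
      have "\<forall>\<^sub>F L in sequentially. real (f x) powr p * indicator {x \<in> space M. L < f x} x = 0"
        by (rule eventually_sequentiallyI[of "f x"]) (auto simp: indicator_def)
      then show "(\<lambda>L. real (f x) powr p * indicator {x \<in> space M. L < f x} x) \<longlonglongrightarrow> 0"
        by (rule tendsto_eventually)
    qed
    show "AE x in M. norm (real (f x) powr p * indicator {x \<in> space M. L < f x} x) \<le> real (f x) powr p" for L
      by (intro AE_I2) (auto simp: indicator_def)
  qed simp
  then show ?thesis
    by simp
qed

lemma measure_gt_le_truncated_moment:
  assumes f: "f \<in> M \<rightarrow>\<^sub>M count_space UNIV" and int: "integrable M (\<lambda>x. real (f x) powr p)"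
    and p: "0 \<le> p" and LN: "L \<le> N" "N > 0"
  shows "measure M {x \<in> space M. N < f x} \<le> truncated_moment f p L / real N powr p"
proof -
  have A_sets: "{x \<in> space M. k < f x} \<in> sets M" for k
    using f by (rule sets_Collect_count_space)
  have "real N powr p * measure M {x \<in> space M. N < f x}
      = (\<integral>x. real N powr p * indicator {x \<in> space M. N < f x} x \<partial>M)"
    using Int_absorb2[of "{x \<in> space M. N < f x}" "space M"] by auto
  also have "\<dots> \<le> truncated_moment f p L"
  proof (intro integral_mono)
    show "integrable M (\<lambda>x. real (f x) powr p * indicator {x \<in> space M. L < f x} x)"
      using int A_sets by (intro integrable_real_mult_indicator)
    show "integrable M (\<lambda>x. real N powr p * indicator {x \<in> space M. N < f x} x)"
      using A_sets by (intro integrable_mult_right integrable_real_indicator)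
        (simp_all add: less_top[symmetric] emeasure_finite)
    show "real N powr p * indicator {x \<in> space M. N < f x} x
        \<le> real (f x) powr p * indicator {x \<in> space M. L < f x} x" for x
      using LN p by (auto simp: indicator_def intro: powr_mono2)
  qed
  finally show ?thesis
    using LN by (simp add: field_simps)
qed

lemma sum_measure_gt_le_truncated_moment:
  assumes f: "f \<in> M \<rightarrow>\<^sub>M count_space UNIV" and int: "integrable M (\<lambda>x. real (f x) powr p)"
    and p: "0 \<le> p" "p \<le> 1"
  shows "(\<Sum>k<N. measure M {x \<in> space M. k < f x})
    \<le> real L * measure M (space M) + real N powr (1 - p) * truncated_moment f p L"
proof -
  have int_J: "integrable M (\<lambda>x. real (f x) powr p * indicator {x \<in> space M. L < f x} x)"
    using int f by (intro integrable_real_mult_indicator sets_Collect_count_space)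
  have "(\<Sum>k<N. measure M {x \<in> space M. k < f x}) = (\<integral>x. real (min (f x) N) \<partial>M)"
    using f by (rule integral_min_eq_sum_measure_gt[symmetric])
  also have "\<dots> \<le> (\<integral>x. real L + real N powr (1 - p) * (real (f x) powr p * indicator {x \<in> space M. L < f x} x) \<partial>M)"
  proof (intro integral_mono)
    show "integrable M (\<lambda>x. real (min (f x) N))"
      using f by (rule integrable_min_count_space)
    show "integrable M (\<lambda>x. real L + real N powr (1 - p) * (real (f x) powr p * indicator {x \<in> space M. L < f x} x))"
      using int_J by (intro Bochner_Integration.integrable_add integrable_mult_right) auto
    show "real (min (f x) N) \<le> real L + real N powr (1 - p) * (real (f x) powr p * indicator {x \<in> space M. L < f x} x)"
      if "x \<in> space M" for x
      using min_le_add_powr[OF p, of "f x" N L] that by (auto simp: indicator_def)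
  qed
  also have "\<dots> = real L * measure M (space M) + real N powr (1 - p) * truncated_moment f p L"
    using int_J by simp
  finally show ?thesis .
qed

lemma tail_mass_le_truncated_moment:
  assumes f: "f \<in> M \<rightarrow>\<^sub>M count_space UNIV" and int: "integrable M (\<lambda>x. real (f x) powr p)"
    and p: "0 \<le> p" "p \<le> 1" and LN: "L \<le> N" "N > 0"
  shows "tail_mass M f N \<le> real L * measure M (space M) / real N + 2 * truncated_moment f p L / real N powr p"
proof -
  have "(\<Sum>k<N. measure M {x \<in> space M. k < f x}) / real N
      \<le> (real L * measure M (space M) + real N powr (1 - p) * truncated_moment f p L) / real N"
    using sum_measure_gt_le_truncated_moment[OF f int p] by (simp add: divide_right_mono)
  also have "\<dots> = real L * measure M (space M) / real N + truncated_moment f p L / real N powr p"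
    using LN by (simp add: add_divide_distrib powr_diff)
  finally show ?thesis
    using measure_gt_le_truncated_moment[OF f int p(1) LN] unfolding tail_mass_def by simp
qed

lemma scaled_tail_mass_le:
  assumes f: "f \<in> M \<rightarrow>\<^sub>M count_space UNIV" and int: "integrable M (\<lambda>x. real (f x) powr p)"
    and p: "0 < p" "p < 1" and \<delta>: "\<delta> > 0" and n: "n \<ge> 1"
    and N: "\<delta> * real n powr (1 / p) \<le> real N" and LN: "L \<le> N"
  shows "real n * tail_mass M f N \<le> real L * measure M (space M) / \<delta> * real n powr (1 - 1 / p)
           + 2 * truncated_moment f p L / \<delta> powr p"
proof -
  define \<mu> where "\<mu> = measure M (space M)"
  define J where "J = truncated_moment f p L"
  have "0 < \<delta> * real n powr (1 / p)"
    using \<delta> n by simp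
  then have N_pos: "N > 0"
    using N by (metis of_nat_0_less_iff order_less_le_trans)
  have "\<delta> powr p * real n = (\<delta> * real n powr (1 / p)) powr p"
    using \<delta> p by (simp add: powr_mult powr_powr)
  also have "\<dots> \<le> real N powr p"
    using N \<delta> p by (intro powr_mono2) auto
  finally have n_Np: "real n / real N powr p \<le> 1 / \<delta> powr p"
    using \<delta> N_pos by (simp add: field_simps)
  have "real n / real N \<le> real n / (\<delta> * real n powr (1 / p))"
    using N n \<delta> N_pos by (intro divide_left_mono) auto
  also have "\<dots> = real n powr (1 - 1 / p) / \<delta>"
    using n by (simp add: powr_diff)
  finally have n_N: "real n / real N \<le> real n powr (1 - 1 / p) / \<delta>" .
  have "real n * tail_mass M f N \<le> real n * (real L * \<mu> / real N + 2 * J / real N powr p)"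
    using tail_mass_le_truncated_moment[OF f int _ _ LN N_pos] p unfolding \<mu>_def J_def
    by (intro mult_left_mono) auto
  also have "\<dots> = real L * \<mu> * (real n / real N) + 2 * J * (real n / real N powr p)"
    by (simp add: field_simps)
  also have "\<dots> \<le> real L * \<mu> * (real n powr (1 - 1 / p) / \<delta>) + 2 * J * (1 / \<delta> powr p)"
    using n_N n_Np unfolding \<mu>_def J_def by (intro add_mono mult_left_mono) (auto intro!: integral_nonneg)
  finally show ?thesis
    unfolding \<mu>_def J_def by simp
qed

lemma eventually_tail_mass_small:
  assumes f: "f \<in> M \<rightarrow>\<^sub>M count_space UNIV" and int: "integrable M (\<lambda>x. real (f x) powr p)"
    and p: "0 < p" "p < 1" and \<delta>: "\<delta> > 0" and \<eta>: "\<eta> > 0"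
  shows "\<forall>\<^sub>F n in sequentially. \<forall>N. \<delta> * real n powr (1 / p) \<le> real N \<longrightarrow> real n * tail_mass M f N \<le> \<eta>"
proof -
  define \<mu> where "\<mu> = measure M (space M)"
  have "\<forall>\<^sub>F L in sequentially. truncated_moment f p L < \<eta> * \<delta> powr p / 4"
    using truncated_moment_tendsto_zero[OF f int] \<eta> \<delta> by (intro order_tendstoD(2)) auto
  then obtain L where L: "2 * truncated_moment f p L / \<delta> powr p < \<eta> / 2"
    using \<delta> by (auto simp: eventually_sequentially field_simps)
  have "(\<lambda>n. real L * \<mu> / \<delta> * real n powr (1 - 1 / p)) \<longlonglongrightarrow> real L * \<mu> / \<delta> * 0"
    using p by (intro tendsto_mult tendsto_const tendsto_neg_powr filterlim_real_sequentially)
      (simp add: field_simps)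
  then have small: "\<forall>\<^sub>F n in sequentially. real L * \<mu> / \<delta> * real n powr (1 - 1 / p) < \<eta> / 2"
    using \<eta> by (intro order_tendstoD(2)) auto
  have "filterlim (\<lambda>n. \<delta> * real n powr (1 / p)) at_top sequentially"
    using p \<delta> by (intro filterlim_tendsto_pos_mult_at_top[OF tendsto_const]
        filterlim_compose[OF real_powr_at_top filterlim_real_sequentially]) auto
  then have large: "\<forall>\<^sub>F n in sequentially. real L \<le> \<delta> * real n powr (1 / p)"
    unfolding filterlim_at_top by (rule spec)
  show ?thesis
    using small large eventually_ge_at_top[of 1]
  proof eventually_elim
    case (elim n)
    show ?case
    proof (intro allI impI)
      fix N assume N: "\<delta> * real n powr (1 / p) \<le> real N"
      then have "L \<le> N"
        using elim(2) by linarith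
      then show "real n * tail_mass M f N \<le> \<eta>"
        using scaled_tail_mass_le[OF f int p \<delta> elim(3) N \<open>L \<le> N\<close>] elim(1) L unfolding \<mu>_def by linarith
    qed
  qed
qed

end

lemma emeasure_Collect_swap_inverse:
  assumes \<Phi>: "\<Phi> \<in> M \<rightarrow>\<^sub>M M" "distr M M \<Phi> = M" and inv: "\<And>x. x \<in> space M \<Longrightarrow> \<Psi> (\<Phi> x) = x"
    and \<Psi>: "\<Psi> \<in> M \<rightarrow>\<^sub>M M" and A: "A \<in> sets M" and B: "B \<in> sets M"
  shows "emeasure M {x \<in> A. \<Phi> x \<in> B} = emeasure M {y \<in> B. \<Psi> y \<in> A}"
proof -
  have "{x \<in> A. \<Phi> x \<in> B} = \<Phi> -` {y \<in> B. \<Psi> y \<in> A} \<inter> space M"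
    using sets.sets_into_space[OF A] inv by auto
  moreover have "{y \<in> B. \<Psi> y \<in> A} \<in> sets M"
  proof -
    have "{y \<in> B. \<Psi> y \<in> A} = B \<inter> (\<Psi> -` A \<inter> space M)"
      using sets.sets_into_space[OF B] by auto
    then show ?thesis
      using measurable_sets[OF \<Psi> A] B by simp
  qed
  ultimately show ?thesis
    using emeasure_distr[OF \<Phi>(1)] \<Phi>(2) by metis
qed

lemma
  assumes I: "countable I" and P: "\<And>i. i \<in> I \<Longrightarrow> P i \<in> sets M"
    and partition: "\<And>x. x \<in> A \<longleftrightarrow> (\<exists>i\<in>I. x \<in> P i)" and disj: "\<And>i j x. i \<in> I \<Longrightarrow> j \<in> I \<Longrightarrow> x \<in> P i \<Longrightarrow> x \<in> P j \<Longrightarrow> i = j"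
  shows sets_countable_partition: "A \<in> sets M"
    and emeasure_countable_partition: "emeasure M A = (\<integral>\<^sup>+ i. emeasure M (P i) \<partial>count_space I)"
proof -
  have A: "A = (\<Union>i\<in>I. P i)"
    using partition by auto
  then show "A \<in> sets M"
    using I P by (auto intro!: sets.countable_UN'')
  have "disjoint_family_on P I"
    unfolding disjoint_family_on_def using disj by blast
  then show "emeasure M A = (\<integral>\<^sup>+ i. emeasure M (P i) \<partial>count_space I)"
    unfolding A using I P by (intro emeasure_UN_countable) auto
qed

lemma sets_Collect_mem:
  assumes f: "f \<in> M \<rightarrow>\<^sub>M N" and A: "A \<in> sets M" and B: "B \<in> sets N"
  shows "{x \<in> A. f x \<in> B} \<in> sets M"
proof -
  have "{x \<in> A. f x \<in> B} = A \<inter> (f -` B \<inter> space M)"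
    using sets.sets_into_space[OF A] by auto
  then show ?thesis
    using measurable_sets[OF f B] A by simp
qed

locale countable_me_coupling =
  fixes G :: "'a monoid" and L :: "'b monoid" and M :: "'w measure"
    and aG :: "'a \<Rightarrow> 'w \<Rightarrow> 'w" and aL :: "'b \<Rightarrow> 'w \<Rightarrow> 'w" and XG XL :: "'w set"
  assumes group_G: "group G" and group_L: "group L"
    and coupling: "me_coupling G L M aG aL XG XL"
    and countable_G: "countable (carrier G)" and countable_L: "countable (carrier L)"
begin

sublocale G: group G by (rule group_G)
sublocale L: group L by (rule group_L)

lemma
  shows mp_action_G: "mp_action G M aG" and mp_action_L: "mp_action L M aL"
    and fund_domain_G: "fund_domain G M aG XG" and fund_domain_L: "fund_domain L M aL XL"
    and actions_commute: "\<And>g l w. g \<in> carrier G \<Longrightarrow> l \<in> carrier L \<Longrightarrow> w \<in> space M \<Longrightarrow> aG g (aL l w) = aL l (aG g w)"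
    and emeasure_space_nonzero: "emeasure M (space M) \<noteq> 0"
  using coupling unfolding me_coupling_def by auto

lemma aG_measurable: "g \<in> carrier G \<Longrightarrow> aG g \<in> M \<rightarrow>\<^sub>M M"
  and distr_aG: "g \<in> carrier G \<Longrightarrow> distr M M (aG g) = M"
  and aG_one: "w \<in> space M \<Longrightarrow> aG \<one>\<^bsub>G\<^esub> w = w"
  and aG_mult: "g \<in> carrier G \<Longrightarrow> h \<in> carrier G \<Longrightarrow> w \<in> space M \<Longrightarrow> aG (g \<otimes>\<^bsub>G\<^esub> h) w = aG g (aG h w)"
  using mp_action_G unfolding mp_action_def by auto

lemma aL_measurable: "l \<in> carrier L \<Longrightarrow> aL l \<in> M \<rightarrow>\<^sub>M M"
  and distr_aL: "l \<in> carrier L \<Longrightarrow> distr M M (aL l) = M"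
  and aL_one: "w \<in> space M \<Longrightarrow> aL \<one>\<^bsub>L\<^esub> w = w"
  and aL_mult: "l \<in> carrier L \<Longrightarrow> k \<in> carrier L \<Longrightarrow> w \<in> space M \<Longrightarrow> aL (l \<otimes>\<^bsub>L\<^esub> k) w = aL l (aL k w)"
  using mp_action_L unfolding mp_action_def by auto

lemma aG_space: "g \<in> carrier G \<Longrightarrow> w \<in> space M \<Longrightarrow> aG g w \<in> space M"
  by (rule measurable_space[OF aG_measurable])

lemma aL_space: "l \<in> carrier L \<Longrightarrow> w \<in> space M \<Longrightarrow> aL l w \<in> space M"
  by (rule measurable_space[OF aL_measurable])

lemma aG_inv_cancel: "g \<in> carrier G \<Longrightarrow> w \<in> space M \<Longrightarrow> aG (inv\<^bsub>G\<^esub> g) (aG g w) = w"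
  using aG_mult[of "inv\<^bsub>G\<^esub> g" g w] aG_one by simp

lemma aL_inv_cancel: "l \<in> carrier L \<Longrightarrow> w \<in> space M \<Longrightarrow> aL (inv\<^bsub>L\<^esub> l) (aL l w) = w"
  using aL_mult[of "inv\<^bsub>L\<^esub> l" l w] aL_one by simp

lemma XG_sets: "XG \<in> sets M"
  and XL_sets: "XL \<in> sets M"
  and emeasure_XL_finite: "emeasure M XL < \<infinity>"
  and ex1_translate_XG: "w \<in> space M \<Longrightarrow> \<exists>!g. g \<in> carrier G \<and> aG g w \<in> XG"
  and ex1_translate_XL: "w \<in> space M \<Longrightarrow> \<exists>!l. l \<in> carrier L \<and> aL l w \<in> XL"
  using fund_domain_G fund_domain_L unfolding fund_domain_def by auto

lemma translate_XG_unique: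
  "w \<in> space M \<Longrightarrow> g \<in> carrier G \<Longrightarrow> h \<in> carrier G \<Longrightarrow> aG g w \<in> XG \<Longrightarrow> aG h w \<in> XG \<Longrightarrow> g = h"
  using ex1_translate_XG by blast

lemma translate_XL_unique:
  "w \<in> space M \<Longrightarrow> l \<in> carrier L \<Longrightarrow> k \<in> carrier L \<Longrightarrow> aL l w \<in> XL \<Longrightarrow> aL k w \<in> XL \<Longrightarrow> l = k"
  using ex1_translate_XL by blast

lemma XL_subset_space: "XL \<subseteq> space M"
  using XL_sets by (rule sets.sets_into_space)

lemma fmeasurable_subset_XL: "A \<in> sets M \<Longrightarrow> A \<subseteq> XL \<Longrightarrow> A \<in> fmeasurable M"
  using emeasure_mono[of A XL M] XL_sets emeasure_XL_finite by (simp add: fmeasurable_def)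

lemma aL_aG_measurable: "g \<in> carrier G \<Longrightarrow> l \<in> carrier L \<Longrightarrow> (\<lambda>x. aL l (aG g x)) \<in> M \<rightarrow>\<^sub>M M"
  using aG_measurable aL_measurable by (rule measurable_compose)

lemma emeasure_Collect_aL_aG:
  assumes "g \<in> carrier G" "l \<in> carrier L" "A \<in> sets M" "B \<in> sets M"
  shows "emeasure M {x \<in> A. aL l (aG g x) \<in> B} = emeasure M {y \<in> B. aL (inv\<^bsub>L\<^esub> l) (aG (inv\<^bsub>G\<^esub> g) y) \<in> A}"
proof (rule emeasure_Collect_swap_inverse)
  show "(\<lambda>x. aL l (aG g x)) \<in> M \<rightarrow>\<^sub>M M" "(\<lambda>y. aL (inv\<^bsub>L\<^esub> l) (aG (inv\<^bsub>G\<^esub> g) y)) \<in> M \<rightarrow>\<^sub>M M"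
    using assms by (simp_all add: aL_aG_measurable)
  have "distr M M (\<lambda>x. aL l (aG g x)) = distr (distr M M (aG g)) M (aL l)"
    using distr_distr[OF aL_measurable aG_measurable] assms by (simp add: comp_def)
  then show "distr M M (\<lambda>x. aL l (aG g x)) = M"
    using assms distr_aG distr_aL by simp
  show "aL (inv\<^bsub>L\<^esub> l) (aG (inv\<^bsub>G\<^esub> g) (aL l (aG g x))) = x" if "x \<in> space M" for x
    using assms that actions_commute aG_space aL_inv_cancel aG_inv_cancel by simp
qed (use assms in auto)

abbreviation coc :: "'a \<Rightarrow> 'w \<Rightarrow> 'b" where
  "coc \<equiv> cocycle L aL aG XL"

definition induced :: "'a \<Rightarrow> 'w \<Rightarrow> 'w" where
  "induced g x = aL (coc g x) (aG g x)"

lemma cocycle_mem: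
  assumes "g \<in> carrier G" "x \<in> space M"
  shows "coc g x \<in> carrier L" "aL (coc g x) (aG g x) \<in> XL"
  using theI'[OF ex1_translate_XL[OF aG_space[OF assms]]] unfolding cocycle_def by auto

lemma cocycle_eqI:
  assumes "g \<in> carrier G" "x \<in> space M" "l \<in> carrier L" "aL l (aG g x) \<in> XL"
  shows "coc g x = l"
  using translate_XL_unique[OF aG_space[OF assms(1,2)] cocycle_mem(1)[OF assms(1,2)] assms(3)
      cocycle_mem(2)[OF assms(1,2)] assms(4)] .

lemma induced_mem_XL: "g \<in> carrier G \<Longrightarrow> x \<in> space M \<Longrightarrow> induced g x \<in> XL"
  unfolding induced_def using cocycle_mem by auto

lemma cocycle_one: "x \<in> XL \<Longrightarrow> coc \<one>\<^bsub>G\<^esub> x = \<one>\<^bsub>L\<^esub>"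
  using XL_subset_space aL_one aG_one by (intro cocycle_eqI) auto

lemma cocycle_mult:
  assumes g: "g \<in> carrier G" and h: "h \<in> carrier G" and x: "x \<in> space M"
  shows "coc (g \<otimes>\<^bsub>G\<^esub> h) x = coc g (induced h x) \<otimes>\<^bsub>L\<^esub> coc h x"
proof (rule cocycle_eqI)
  define y where "y = induced h x"
  have l2: "coc h x \<in> carrier L"
    using cocycle_mem[OF h x] by simp
  have y: "y \<in> space M"
    using induced_mem_XL[OF h x] XL_subset_space unfolding y_def by auto
  then have l1: "coc g y \<in> carrier L"
    using cocycle_mem[OF g] by simp
  have "aG g y = aL (coc h x) (aG (g \<otimes>\<^bsub>G\<^esub> h) x)"
    unfolding y_def induced_def using g h x l2 by (simp add: aG_mult aG_space actions_commute)
  then have "aL (coc g y \<otimes>\<^bsub>L\<^esub> coc h x) (aG (g \<otimes>\<^bsub>G\<^esub> h) x) = aL (coc g y) (aG g y)"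
    using l1 l2 g h x by (simp add: aL_mult aG_space)
  then show "aL (coc g (induced h x) \<otimes>\<^bsub>L\<^esub> coc h x) (aG (g \<otimes>\<^bsub>G\<^esub> h) x) \<in> XL"
    using cocycle_mem[OF g y] unfolding y_def by simp
  show "coc g (induced h x) \<otimes>\<^bsub>L\<^esub> coc h x \<in> carrier L"
    using l1 l2 unfolding y_def by simp
qed (use g h x in auto)

lemma sets_Collect_cocycle:
  assumes g: "g \<in> carrier G"
  shows "{x \<in> XL. P (coc g x)} \<in> sets M"
proof (rule sets_countable_partition)
  show "countable {l \<in> carrier L. P l}"
    using countable_L by (rule countable_subset[rotated]) auto
  show "{x \<in> XL. aL l (aG g x) \<in> XL} \<in> sets M" if "l \<in> {l \<in> carrier L. P l}" for l
    using that g XL_sets by (intro sets_Collect_mem[OF aL_aG_measurable]) auto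
  show "x \<in> {x \<in> XL. P (coc g x)} \<longleftrightarrow> (\<exists>l\<in>{l \<in> carrier L. P l}. x \<in> {x \<in> XL. aL l (aG g x) \<in> XL})" for x
    using cocycle_mem[OF g] cocycle_eqI[OF g] XL_subset_space by blast
  show "l = l'" if "x \<in> {x \<in> XL. aL l (aG g x) \<in> XL}" "x \<in> {x \<in> XL. aL l' (aG g x) \<in> XL}"
    "l \<in> {l \<in> carrier L. P l}" "l' \<in> {l \<in> carrier L. P l}" for l l' x
    using that cocycle_eqI[OF g, of x] XL_subset_space by auto
qed

abbreviation MXL :: "'w measure" where
  "MXL \<equiv> restrict_space M XL"

lemma space_MXL [simp]: "space MXL = XL"
  using XL_sets by simp

lemma sets_MXL_iff: "A \<in> sets MXL \<longleftrightarrow> A \<subseteq> XL \<and> A \<in> sets M"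
  using XL_sets XL_subset_space by (intro sets_restrict_space_iff) (simp add: Int_absorb2)

lemma emeasure_MXL: "A \<subseteq> XL \<Longrightarrow> emeasure MXL A = emeasure M A"
  using XL_sets XL_subset_space by (intro emeasure_restrict_space) (simp_all add: Int_absorb2)

lemma measure_MXL: "A \<subseteq> XL \<Longrightarrow> measure MXL A = measure M A"
  using emeasure_MXL by (simp add: measure_def)

lemma finite_measure_MXL: "finite_measure MXL"
  using emeasure_MXL[of XL] emeasure_XL_finite by (intro finite_measureI) simp

lemma cocycle_measurable:
  assumes g: "g \<in> carrier G"
  shows "(\<lambda>x. h (coc g x)) \<in> MXL \<rightarrow>\<^sub>M count_space UNIV"
proof (rule measurableI)
  fix A
  have "(\<lambda>x. h (coc g x)) -` A \<inter> space MXL = {x \<in> XL. h (coc g x) \<in> A}"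
    by auto
  then show "(\<lambda>x. h (coc g x)) -` A \<inter> space MXL \<in> sets MXL"
    using sets_Collect_cocycle[OF g] by (simp add: sets_MXL_iff)
qed simp

lemma emeasure_eq_nn_integral_translates_XL:
  assumes g: "g \<in> carrier G" and B: "B \<in> sets M"
  shows "emeasure M B
    = (\<integral>\<^sup>+ l. emeasure M {y \<in> B. aL (inv\<^bsub>L\<^esub> l) (aG (inv\<^bsub>G\<^esub> g) y) \<in> XL} \<partial>count_space (carrier L))"
proof (rule emeasure_countable_partition[OF countable_L])
  show "{y \<in> B. aL (inv\<^bsub>L\<^esub> l) (aG (inv\<^bsub>G\<^esub> g) y) \<in> XL} \<in> sets M" if "l \<in> carrier L" for l
    using that g B XL_sets by (intro sets_Collect_mem[OF aL_aG_measurable]) auto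
  have gy: "aG (inv\<^bsub>G\<^esub> g) y \<in> space M" if "y \<in> B" for y
    using that g sets.sets_into_space[OF B] by (intro aG_space) auto
  show "y \<in> B \<longleftrightarrow> (\<exists>l\<in>carrier L. y \<in> {y \<in> B. aL (inv\<^bsub>L\<^esub> l) (aG (inv\<^bsub>G\<^esub> g) y) \<in> XL})" for y
  proof
    assume y: "y \<in> B"
    then obtain l' where "l' \<in> carrier L" "aL l' (aG (inv\<^bsub>G\<^esub> g) y) \<in> XL"
      using ex1_translate_XL[OF gy] by blast
    then show "\<exists>l\<in>carrier L. y \<in> {y \<in> B. aL (inv\<^bsub>L\<^esub> l) (aG (inv\<^bsub>G\<^esub> g) y) \<in> XL}"
      using y by (intro bexI[of _ "inv\<^bsub>L\<^esub> l'"]) auto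
  qed auto
  show "l = l'" if "l \<in> carrier L" "l' \<in> carrier L" "y \<in> {y \<in> B. aL (inv\<^bsub>L\<^esub> l) (aG (inv\<^bsub>G\<^esub> g) y) \<in> XL}"
    "y \<in> {y \<in> B. aL (inv\<^bsub>L\<^esub> l') (aG (inv\<^bsub>G\<^esub> g) y) \<in> XL}" for l l' y
  proof -
    have "inv\<^bsub>L\<^esub> l = inv\<^bsub>L\<^esub> l'"
      using translate_XL_unique[OF gy[of y], of "inv\<^bsub>L\<^esub> l" "inv\<^bsub>L\<^esub> l'"] that by simp
    then show ?thesis
      using that by (metis L.inv_inv)
  qed
qed

lemma induced_preserves_emeasure:
  assumes g: "g \<in> carrier G" and B: "B \<in> sets M" "B \<subseteq> XL"
  shows "{x \<in> XL. induced g x \<in> B} \<in> sets M"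
    and "emeasure M {x \<in> XL. induced g x \<in> B} = emeasure M B"
proof -
  define P where "P l = {x \<in> XL. aL l (aG g x) \<in> B}" for l
  have P_sets: "P l \<in> sets M" if "l \<in> carrier L" for l
    unfolding P_def using that g B XL_sets by (intro sets_Collect_mem[OF aL_aG_measurable])
  have P_partition: "x \<in> {x \<in> XL. induced g x \<in> B} \<longleftrightarrow> (\<exists>l\<in>carrier L. x \<in> P l)" for x
    unfolding P_def induced_def using cocycle_mem[OF g] cocycle_eqI[OF g] XL_subset_space B(2) by blast
  have P_disj: "l = l'" if "l \<in> carrier L" "l' \<in> carrier L" "x \<in> P l" "x \<in> P l'" for l l' x
    using that cocycle_eqI[OF g, of x] XL_subset_space B(2) unfolding P_def by auto
  show "{x \<in> XL. induced g x \<in> B} \<in> sets M"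
    using countable_L P_sets P_partition P_disj by (rule sets_countable_partition)
  have "emeasure M {x \<in> XL. induced g x \<in> B} = (\<integral>\<^sup>+ l. emeasure M (P l) \<partial>count_space (carrier L))"
    using countable_L P_sets P_partition P_disj by (rule emeasure_countable_partition)
  also have "\<dots> = (\<integral>\<^sup>+ l. emeasure M {y \<in> B. aL (inv\<^bsub>L\<^esub> l) (aG (inv\<^bsub>G\<^esub> g) y) \<in> XL} \<partial>count_space (carrier L))"
    unfolding P_def using g B XL_sets by (intro nn_integral_cong emeasure_Collect_aL_aG) auto
  also have "\<dots> = emeasure M B"
    using g B(1) by (rule emeasure_eq_nn_integral_translates_XL[symmetric])
  finally show "emeasure M {x \<in> XL. induced g x \<in> B} = emeasure M B" .
qed

lemma induced_measurable:
  assumes g: "g \<in> carrier G"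
  shows "induced g \<in> MXL \<rightarrow>\<^sub>M MXL"
proof (rule measurableI)
  fix B assume "B \<in> sets MXL"
  then have B: "B \<in> sets M" "B \<subseteq> XL"
    by (simp_all add: sets_MXL_iff)
  have "induced g -` B \<inter> space MXL = {x \<in> XL. induced g x \<in> B}"
    by auto
  then show "induced g -` B \<inter> space MXL \<in> sets MXL"
    using induced_preserves_emeasure(1)[OF g B] by (simp add: sets_MXL_iff)
qed (use g induced_mem_XL XL_subset_space in auto)

lemma distr_induced: "g \<in> carrier G \<Longrightarrow> distr MXL MXL (induced g) = MXL"
proof (rule measure_eqI)
  fix B assume g: "g \<in> carrier G" and "B \<in> sets (distr MXL MXL (induced g))"
  then have B: "B \<in> sets M" "B \<subseteq> XL"
    by (simp_all add: sets_MXL_iff)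
  have "induced g -` B \<inter> space MXL = {x \<in> XL. induced g x \<in> B}"
    by auto
  then show "emeasure (distr MXL MXL (induced g)) B = emeasure MXL B"
    using g B induced_preserves_emeasure[OF g B] induced_measurable[OF g]
    by (simp add: emeasure_distr sets_MXL_iff emeasure_MXL)
qed simp

lemma word_len_cocycle_word_prod_le:
  assumes S: "fin_gen_set L S" and ws: "set ws \<subseteq> carrier G" and x: "x \<in> XL"
  shows "word_len L S (coc (word_prod G ws) x) \<le>
    (\<Sum>i<length ws. word_len L S (coc (ws ! i) (induced (word_prod G (drop (Suc i) ws)) x)))"
  using ws
proof (induction ws)
  case Nil
  then show ?case
    using cocycle_one[OF x] by simp
next
  case (Cons s ws)
  have s: "s \<in> carrier G" and ws: "set ws \<subseteq> carrier G"
    using Cons.prems by auto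
  have w: "word_prod G ws \<in> carrier G"
    using G.word_prod_closed[OF ws] .
  have x': "x \<in> space M" "induced (word_prod G ws) x \<in> space M"
    using x induced_mem_XL[OF w] XL_subset_space by auto
  have "word_len L S (coc (word_prod G (s # ws)) x)
      = word_len L S (coc s (induced (word_prod G ws) x) \<otimes>\<^bsub>L\<^esub> coc (word_prod G ws) x)"
    using cocycle_mult[OF s w x'(1)] by simp
  also have "\<dots> \<le> word_len L S (coc s (induced (word_prod G ws) x)) + word_len L S (coc (word_prod G ws) x)"
    using L.word_len_mult_le[OF S] cocycle_mem s w x' by simp
  also have "\<dots> \<le> word_len L S (coc s (induced (word_prod G ws) x)) +
      (\<Sum>i<length ws. word_len L S (coc (ws ! i) (induced (word_prod G (drop (Suc i) ws)) x)))"
    using Cons.IH[OF ws] by simp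
  also have "\<dots> = (\<Sum>i<length (s # ws).
      word_len L S (coc ((s # ws) ! i) (induced (word_prod G (drop (Suc i) (s # ws))) x)))"
    unfolding length_Cons sum.lessThan_Suc_shift by simp
  finally show ?case .
qed

lemma measure_word_len_cocycle_gt_le:
  assumes SG: "fin_gen_set G SG" and S: "fin_gen_set L S" and g: "g \<in> carrier G" and N: "N > 0"
  shows "measure M {x \<in> XL. N < word_len L S (coc g x)} \<le>
    real (word_len G SG g) * (\<Sum>s\<in>sym_gens G SG. tail_mass MXL (\<lambda>x. word_len L S (coc s x)) N)"
proof -
  interpret MXL: finite_measure MXL
    by (rule finite_measure_MXL)
  define W where "W = sym_gens G SG"
  have W: "W \<subseteq> carrier G" "finite W"
    using SG G.sym_gens_subset_carrier G.finite_sym_gens unfolding fin_gen_set_def W_def by auto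
  obtain ws where ws: "length ws = word_len G SG g" "set ws \<subseteq> W" "word_prod G ws = g"
    using G.word_len_witness[OF SG g] unfolding W_def by blast
  define t where "t s = tail_mass MXL (\<lambda>x. word_len L S (coc s x)) N" for s
  define tail where "tail i = word_prod G (drop (Suc i) ws)" for i
  have ws_G: "set ws \<subseteq> carrier G"
    using ws W by auto
  have tail_G: "tail i \<in> carrier G" for i
    unfolding tail_def using ws_G by (intro G.word_prod_closed) (meson order.trans set_drop_subset)
  have nth_G: "ws ! i \<in> carrier G" if "i < length ws" for i
    using ws_G that nth_mem by blast
  have "measure M {x \<in> XL. N < word_len L S (coc g x)}
      = measure MXL {x \<in> XL. N < word_len L S (coc (word_prod G ws) x)}"
    using ws(3) by (simp add: measure_MXL)
  also have "\<dots> \<le> (\<Sum>i<length ws. tail_mass MXL (\<lambda>x. word_len L S (coc (ws ! i) (induced (tail i) x))) N)"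
  proof (rule MXL.measure_le_sum_tail_mass)
    show "(\<lambda>x. word_len L S (coc (ws ! i) (induced (tail i) x))) \<in> MXL \<rightarrow>\<^sub>M count_space UNIV"
      if "i \<in> {..<length ws}" for i
      using that nth_G tail_G by (intro measurable_compose[OF induced_measurable cocycle_measurable]) auto
    show "{x \<in> XL. N < word_len L S (coc (word_prod G ws) x)}
        \<subseteq> {x \<in> space MXL. N < (\<Sum>i<length ws. word_len L S (coc (ws ! i) (induced (tail i) x)))}"
      using word_len_cocycle_word_prod_le[OF S ws_G] unfolding tail_def by (auto intro: less_le_trans)
  qed (use N in auto)
  also have "\<dots> = (\<Sum>i<length ws. t (ws ! i))"
    unfolding t_def using nth_G tail_G
    by (intro sum.cong refl MXL.tail_mass_comp_measure_preserving induced_measurable distr_induced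
        cocycle_measurable) auto
  also have "\<dots> \<le> (\<Sum>i<length ws. \<Sum>s\<in>W. t s)"
    using ws W(2) unfolding t_def by (intro sum_mono member_le_sum tail_mass_nonneg) auto
  also have "\<dots> = real (length ws) * (\<Sum>s\<in>W. t s)"
    by simp
  finally show ?thesis
    unfolding t_def W_def ws(1) .
qed

lemma emeasure_XL_pos: "emeasure M XL > 0"
proof (rule ccontr)
  assume "\<not> emeasure M XL > 0"
  then have XL_null: "emeasure M XL = 0"
    by simp
  have "emeasure M (space M) = (\<integral>\<^sup>+ l. emeasure M {w \<in> space M. aL l w \<in> XL} \<partial>count_space (carrier L))"
    using countable_L
  proof (rule emeasure_countable_partition)
    show "{w \<in> space M. aL l w \<in> XL} \<in> sets M" if "l \<in> carrier L" for l
      using that XL_sets by (intro sets_Collect_mem[OF aL_measurable]) auto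
    show "w \<in> space M \<longleftrightarrow> (\<exists>l\<in>carrier L. w \<in> {w \<in> space M. aL l w \<in> XL})" for w
      using ex1_translate_XL[of w] by blast
    show "l = l'" if "l \<in> carrier L" "l' \<in> carrier L" "w \<in> {w \<in> space M. aL l w \<in> XL}"
      "w \<in> {w \<in> space M. aL l' w \<in> XL}" for l l' w
      using translate_XL_unique[of w l l'] that by simp
  qed
  also have "\<dots> = (\<integral>\<^sup>+ l. emeasure M XL \<partial>count_space (carrier L))"
  proof (intro nn_integral_cong)
    fix l assume "l \<in> space (count_space (carrier L))"
    then have "emeasure M {w \<in> space M. aL l w \<in> XL} = emeasure (distr M M (aL l)) XL"
      using XL_sets by (subst emeasure_distr[OF aL_measurable]) (auto simp: vimage_def Int_def conj_commute)
    then show "emeasure M {w \<in> space M. aL l w \<in> XL} = emeasure M XL"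
      using \<open>l \<in> space (count_space (carrier L))\<close> distr_aL by simp
  qed
  finally show False
    using XL_null emeasure_space_nonzero by simp
qed

definition overlap :: "'a \<Rightarrow> 'w set" where
  "overlap d = {x \<in> XL. aG d x \<in> XG}"

lemma overlap_subset_XL: "overlap d \<subseteq> XL"
  unfolding overlap_def by auto

lemma overlap_sets: "d \<in> carrier G \<Longrightarrow> overlap d \<in> sets M"
  unfolding overlap_def using XL_sets XG_sets by (intro sets_Collect_mem[OF aG_measurable])

lemma exists_overlap_pos: "\<exists>d\<in>carrier G. emeasure M (overlap d) > 0"
proof (rule ccontr)
  assume "\<not> (\<exists>d\<in>carrier G. emeasure M (overlap d) > 0)"
  then have "emeasure M (overlap d) = 0" if "d \<in> carrier G" for d
    using that by simp
  moreover have "emeasure M XL = (\<integral>\<^sup>+ d. emeasure M (overlap d) \<partial>count_space (carrier G))"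
    using countable_G overlap_sets
  proof (rule emeasure_countable_partition)
    show "x \<in> XL \<longleftrightarrow> (\<exists>d\<in>carrier G. x \<in> overlap d)" for x
      unfolding overlap_def using ex1_translate_XG[of x] XL_subset_space by blast
    show "d = d'" if "d \<in> carrier G" "d' \<in> carrier G" "x \<in> overlap d" "x \<in> overlap d'" for d d' x
      using translate_XG_unique[of x d d'] that XL_subset_space unfolding overlap_def by auto
  qed
  moreover have "(\<integral>\<^sup>+ d. emeasure M (overlap d) \<partial>count_space (carrier G)) = (\<integral>\<^sup>+ d. 0 \<partial>count_space (carrier G))"
    using calculation(1) by (intro nn_integral_cong) simp
  ultimately have "emeasure M XL = 0"
    by simp
  then show False
    using emeasure_XL_pos by simp
qed

lemma overlap_translates_disjoint:
  assumes d: "d \<in> carrier G" and g: "g \<in> carrier G" "g' \<in> carrier G" and l: "l \<in> carrier L"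
    and y: "y \<in> space M" "aL (inv\<^bsub>L\<^esub> l) (aG (inv\<^bsub>G\<^esub> g) y) \<in> overlap d"
      "aL (inv\<^bsub>L\<^esub> l) (aG (inv\<^bsub>G\<^esub> g') y) \<in> overlap d"
  shows "g = g'"
proof -
  define u where "u = aL (inv\<^bsub>L\<^esub> l) y"
  have u: "u \<in> space M"
    unfolding u_def using y l by (intro aL_space) auto
  have "aL (inv\<^bsub>L\<^esub> l) (aG (inv\<^bsub>G\<^esub> h) y) = aG (inv\<^bsub>G\<^esub> h) u" if "h \<in> carrier G" for h
    unfolding u_def using that l y(1) by (simp add: actions_commute)
  then have "aG (inv\<^bsub>G\<^esub> g) u \<in> overlap d" "aG (inv\<^bsub>G\<^esub> g') u \<in> overlap d"
    using y g by auto
  then have "aG (d \<otimes>\<^bsub>G\<^esub> inv\<^bsub>G\<^esub> g) u \<in> XG" "aG (d \<otimes>\<^bsub>G\<^esub> inv\<^bsub>G\<^esub> g') u \<in> XG"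
    using d g u by (simp_all add: overlap_def aG_mult)
  then have "d \<otimes>\<^bsub>G\<^esub> inv\<^bsub>G\<^esub> g = d \<otimes>\<^bsub>G\<^esub> inv\<^bsub>G\<^esub> g'"
    using translate_XG_unique[OF u] d g by simp
  then have "inv\<^bsub>G\<^esub> g = inv\<^bsub>G\<^esub> g'"
    using d g by simp
  then show "g = g'"
    using g by (metis G.inv_inv)
qed

lemma sum_measure_overlap_translates_le:
  assumes d: "d \<in> carrier G" and F: "finite F" "F \<subseteq> carrier G" and l: "l \<in> carrier L"
  shows "(\<Sum>g\<in>F. measure M {x \<in> overlap d. aL l (aG g x) \<in> XL}) \<le> measure M XL"
proof -
  define Y where "Y g = {y \<in> XL. aL (inv\<^bsub>L\<^esub> l) (aG (inv\<^bsub>G\<^esub> g) y) \<in> overlap d}" for g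
  have Y_sets: "Y g \<in> sets M" if "g \<in> carrier G" for g
    unfolding Y_def using that l XL_sets overlap_sets[OF d] by (intro sets_Collect_mem[OF aL_aG_measurable]) auto
  have Y_fin: "emeasure M (Y g) \<noteq> \<infinity>" if "g \<in> carrier G" for g
    using fmeasurable_subset_XL[OF Y_sets[OF that]] unfolding Y_def by (auto simp: fmeasurable_def)
  have "measure M {x \<in> overlap d. aL l (aG g x) \<in> XL} = measure M (Y g)" if "g \<in> carrier G" for g
    unfolding Y_def measure_def using that l d XL_sets overlap_sets
    by (subst emeasure_Collect_aL_aG) auto
  then have "(\<Sum>g\<in>F. measure M {x \<in> overlap d. aL l (aG g x) \<in> XL}) = (\<Sum>g\<in>F. measure M (Y g))"
    using F by (intro sum.cong) auto
  also have "\<dots> = measure M (\<Union>g\<in>F. Y g)"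
  proof (rule measure_finite_Union[symmetric, OF F(1)])
    show "Y ` F \<subseteq> sets M" "\<And>g. g \<in> F \<Longrightarrow> emeasure M (Y g) \<noteq> \<infinity>"
      using Y_sets Y_fin F by auto
    show "disjoint_family_on Y F"
      unfolding disjoint_family_on_def Y_def
    proof (intro ballI impI equalityI subsetI)
      fix g g' y assume "g \<in> F" "g' \<in> F" "g \<noteq> g'"
        and "y \<in> {y \<in> XL. aL (inv\<^bsub>L\<^esub> l) (aG (inv\<^bsub>G\<^esub> g) y) \<in> overlap d}
          \<inter> {y \<in> XL. aL (inv\<^bsub>L\<^esub> l) (aG (inv\<^bsub>G\<^esub> g') y) \<in> overlap d}"
      then show "y \<in> {}"
        using overlap_translates_disjoint[OF d _ _ l, of g g' y] F XL_subset_space by auto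
    qed simp
  qed
  also have "\<dots> \<le> measure M XL"
    using Y_sets F XL_sets emeasure_XL_finite unfolding Y_def
    by (intro measure_mono_fmeasurable) (auto simp: fmeasurable_def intro!: sets.finite_UN)
  finally show ?thesis .
qed

lemma half_overlap_le_sum_translates:
  assumes d: "d \<in> carrier G" and g: "g \<in> carrier G" and E: "finite E" "E \<subseteq> carrier L"
    and concentrated: "measure M {x \<in> XL. coc g x \<notin> E} \<le> measure M (overlap d) / 2"
  shows "measure M (overlap d) / 2 \<le> (\<Sum>l\<in>E. measure M {x \<in> overlap d. aL l (aG g x) \<in> XL})"
proof -
  define A where "A = {x \<in> overlap d. coc g x \<in> E}"
  define B where "B = {x \<in> XL. coc g x \<notin> E}"
  have P_sets: "{x \<in> overlap d. aL l (aG g x) \<in> XL} \<in> sets M" if "l \<in> carrier L" for l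
    using that g overlap_sets[OF d] XL_sets by (intro sets_Collect_mem[OF aL_aG_measurable])
  have "A = overlap d \<inter> {x \<in> XL. coc g x \<in> E}"
    unfolding A_def using overlap_subset_XL by auto
  then have A_sets: "A \<in> sets M"
    using overlap_sets[OF d] sets_Collect_cocycle[OF g] by simp
  have B_sets: "B \<in> sets M"
    unfolding B_def by (rule sets_Collect_cocycle[OF g])
  have "measure M (overlap d) \<le> measure M (A \<union> B)"
    using A_sets B_sets overlap_subset_XL unfolding A_def B_def
    by (intro measure_mono_fmeasurable overlap_sets d fmeasurable_subset_XL) auto
  also have "\<dots> \<le> measure M A + measure M B"
    using A_sets B_sets by (rule measure_Un_le)
  finally have "measure M (overlap d) / 2 \<le> measure M A"
    using concentrated unfolding B_def by simp
  also have "\<dots> \<le> measure M (\<Union>l\<in>E. {x \<in> overlap d. aL l (aG g x) \<in> XL})"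
  proof (rule measure_mono_fmeasurable[OF _ A_sets])
    show "A \<subseteq> (\<Union>l\<in>E. {x \<in> overlap d. aL l (aG g x) \<in> XL})"
      unfolding A_def using cocycle_mem[OF g] overlap_subset_XL XL_subset_space by blast
    show "(\<Union>l\<in>E. {x \<in> overlap d. aL l (aG g x) \<in> XL}) \<in> fmeasurable M"
      using P_sets E by (intro fmeasurable_subset_XL sets.finite_UN) (auto simp: overlap_def)
  qed
  also have "\<dots> \<le> (\<Sum>l\<in>E. measure M {x \<in> overlap d. aL l (aG g x) \<in> XL})"
    using P_sets E by (intro measure_UNION_le) auto
  finally show ?thesis .
qed

lemma card_mult_measure_overlap_le:
  assumes d: "d \<in> carrier G" and F: "finite F" "F \<subseteq> carrier G" and E: "finite E" "E \<subseteq> carrier L"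
    and concentrated: "\<And>g. g \<in> F \<Longrightarrow> measure M {x \<in> XL. coc g x \<notin> E} \<le> measure M (overlap d) / 2"
  shows "real (card F) * (measure M (overlap d) / 2) \<le> real (card E) * measure M XL"
proof -
  define P where "P g l = measure M {x \<in> overlap d. aL l (aG g x) \<in> XL}" for g l
  have "real (card F) * (measure M (overlap d) / 2) = (\<Sum>g\<in>F. measure M (overlap d) / 2)"
    by simp
  also have "\<dots> \<le> (\<Sum>g\<in>F. \<Sum>l\<in>E. P g l)"
    unfolding P_def using half_overlap_le_sum_translates[OF d _ E] concentrated F
    by (intro sum_mono) auto
  also have "\<dots> = (\<Sum>l\<in>E. \<Sum>g\<in>F. P g l)"
    by (rule sum.swap)
  also have "\<dots> \<le> (\<Sum>l\<in>E. measure M XL)"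
    unfolding P_def using sum_measure_overlap_translates_le[OF d F] E by (intro sum_mono) auto
  also have "\<dots> = real (card E) * measure M XL"
    by simp
  finally show ?thesis .
qed

lemma exists_card_bound:
  obtains \<kappa> where "\<kappa> > 0"
    "\<And>F E. finite F \<Longrightarrow> F \<subseteq> carrier G \<Longrightarrow> finite E \<Longrightarrow> E \<subseteq> carrier L \<Longrightarrow>
       (\<And>g. g \<in> F \<Longrightarrow> measure M {x \<in> XL. coc g x \<notin> E} \<le> \<kappa>) \<Longrightarrow>
       real (card F) \<le> measure M XL / \<kappa> * real (card E)"
proof -
  obtain d where d: "d \<in> carrier G" "emeasure M (overlap d) > 0"
    using exists_overlap_pos by blast
  define \<kappa> where "\<kappa> = measure M (overlap d) / 2"
  have \<kappa>_pos: "\<kappa> > 0"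
    using d fmeasurable_subset_XL[OF overlap_sets[OF d(1)] overlap_subset_XL]
    unfolding \<kappa>_def by (simp add: emeasure_eq_measure2)
  show ?thesis
  proof (rule that[OF \<kappa>_pos])
    fix F E assume F: "finite F" "F \<subseteq> carrier G" and E: "finite E" "E \<subseteq> carrier L"
      and concentrated: "\<And>g. g \<in> F \<Longrightarrow> measure M {x \<in> XL. coc g x \<notin> E} \<le> \<kappa>"
    have "real (card F) * \<kappa> \<le> real (card E) * measure M XL"
      using card_mult_measure_overlap_le[OF d(1) F E] concentrated unfolding \<kappa>_def by blast
    then show "real (card F) \<le> measure M XL / \<kappa> * real (card E)"
      using \<kappa>_pos by (simp add: field_simps)
  qed
qed

lemma finite_carrier_G_if_finite_carrier_L:
  assumes "finite (carrier L)"
  shows "finite (carrier G)"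
proof (rule ccontr)
  assume "infinite (carrier G)"
  obtain \<kappa> where \<kappa>: "\<kappa> > 0"
    "\<And>F E. finite F \<Longrightarrow> F \<subseteq> carrier G \<Longrightarrow> finite E \<Longrightarrow> E \<subseteq> carrier L \<Longrightarrow>
       (\<And>g. g \<in> F \<Longrightarrow> measure M {x \<in> XL. coc g x \<notin> E} \<le> \<kappa>) \<Longrightarrow>
       real (card F) \<le> measure M XL / \<kappa> * real (card E)"
    using exists_card_bound by blast
  define K where "K = measure M XL / \<kappa> * real (card (carrier L))"
  obtain F where F: "finite F" "F \<subseteq> carrier G" "card F = nat \<lceil>K\<rceil> + 1"
    using \<open>infinite (carrier G)\<close> infinite_arbitrarily_large by blast
  have "real (card F) \<le> K"
    unfolding K_def
  proof (rule \<kappa>(2)[OF F(1,2) assms order.refl])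
    fix g assume "g \<in> F"
    then have "{x \<in> XL. coc g x \<notin> carrier L} = {}"
      using cocycle_mem(1) F XL_subset_space by blast
    then have "measure M {x \<in> XL. coc g x \<notin> carrier L} = 0"
      by (simp only: measure_empty)
    then show "measure M {x \<in> XL. coc g x \<notin> carrier L} \<le> \<kappa>"
      using \<kappa>(1) by simp
  qed
  then show False
    using F(3) by linarith
qed

lemma eventually_cocycle_tail_mass_small:
  assumes SG: "fin_gen_set G SG" and S: "fin_gen_set L S" and p: "0 < p" "p < 1"
    and moment: "\<And>g. g \<in> carrier G \<Longrightarrow> (\<integral>\<^sup>+ x. ennreal (real (word_len L S (coc g x)) powr p) \<partial>MXL) < \<infinity>"
    and \<delta>: "\<delta> > 0" and \<eta>: "\<eta> > 0"
  shows "\<forall>\<^sub>F n in sequentially. \<forall>s\<in>sym_gens G SG. \<forall>N. \<delta> * real n powr (1 / p) \<le> real N \<longrightarrow>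
           real n * tail_mass MXL (\<lambda>x. word_len L S (coc s x)) N \<le> \<eta>"
proof (intro eventually_ball_finite ballI finite_measure.eventually_tail_mass_small[OF finite_measure_MXL])
  show "finite (sym_gens G SG)"
    using SG G.finite_sym_gens unfolding fin_gen_set_def by blast
  fix s assume "s \<in> sym_gens G SG"
  then have s: "s \<in> carrier G"
    using SG G.sym_gens_subset_carrier unfolding fin_gen_set_def by blast
  show "(\<lambda>x. word_len L S (coc s x)) \<in> MXL \<rightarrow>\<^sub>M count_space UNIV"
    using s by (rule cocycle_measurable)
  have "(\<lambda>x. real (word_len L S (coc s x)) powr p) \<in> borel_measurable MXL"
    using s by (intro measurable_compose[OF cocycle_measurable[of s "word_len L S"]]) simp_all
  then show "integrable MXL (\<lambda>x. real (word_len L S (coc s x)) powr p)"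
    using moment[OF s] by (intro integrableI_bounded) simp_all
qed (use p \<delta> \<eta> in auto)

lemma measure_cocycle_outside_ball_le:
  assumes SG: "fin_gen_set G SG" and S: "fin_gen_set L S" and g: "g \<in> carrier G" "word_len G SG g \<le> n"
    and N: "N > 0" "real N \<le> r"
    and tails: "\<And>s. s \<in> sym_gens G SG \<Longrightarrow> real n * tail_mass MXL (\<lambda>x. word_len L S (coc s x)) N \<le> \<eta>"
  shows "measure M {x \<in> XL. coc g x \<notin> {l \<in> carrier L. real (word_len L S l) \<le> r}}
           \<le> real (card (sym_gens G SG)) * \<eta>"
proof -
  define t where "t s = tail_mass MXL (\<lambda>x. word_len L S (coc s x)) N" for s
  have "{x \<in> XL. coc g x \<notin> {l \<in> carrier L. real (word_len L S l) \<le> r}}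
      \<subseteq> {x \<in> XL. N < word_len L S (coc g x)}"
  proof
    fix x assume x: "x \<in> {x \<in> XL. coc g x \<notin> {l \<in> carrier L. real (word_len L S l) \<le> r}}"
    then have "coc g x \<in> carrier L"
      using cocycle_mem(1)[OF g(1)] XL_subset_space by auto
    then have "real N < real (word_len L S (coc g x))"
      using x N(2) by auto
    then show "x \<in> {x \<in> XL. N < word_len L S (coc g x)}"
      using x by simp
  qed
  then have "measure M {x \<in> XL. coc g x \<notin> {l \<in> carrier L. real (word_len L S l) \<le> r}}
      \<le> measure M {x \<in> XL. N < word_len L S (coc g x)}"
    using sets_Collect_cocycle[OF g(1)] by (intro measure_mono_fmeasurable fmeasurable_subset_XL) auto
  also have "\<dots> \<le> real (word_len G SG g) * (\<Sum>s\<in>sym_gens G SG. t s)"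
    unfolding t_def by (rule measure_word_len_cocycle_gt_le[OF SG S g(1) N(1)])
  also have "\<dots> \<le> (\<Sum>s\<in>sym_gens G SG. real n * t s)"
    using g(2) unfolding sum_distrib_left[symmetric] t_def
    by (intro mult_right_mono sum_nonneg tail_mass_nonneg) auto
  also have "\<dots> \<le> real (card (sym_gens G SG)) * \<eta>"
    using tails unfolding t_def by (simp add: sum_bounded_above)
  finally show ?thesis .
qed

lemma eventually_cocycle_concentrated_on_balls:
  assumes SG: "fin_gen_set G SG" and S: "fin_gen_set L S" and p: "0 < p" "p < 1"
    and moment: "\<And>g. g \<in> carrier G \<Longrightarrow> (\<integral>\<^sup>+ x. ennreal (real (word_len L S (coc g x)) powr p) \<partial>MXL) < \<infinity>"
    and \<delta>: "\<delta> > 0" and \<kappa>: "\<kappa> > 0"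
  shows "\<forall>\<^sub>F n in sequentially. \<forall>g\<in>carrier G. word_len G SG g \<le> n \<longrightarrow>
    measure M {x \<in> XL. coc g x \<notin> {l \<in> carrier L. real (word_len L S l) \<le> \<delta> * real n powr (1 / p)}} \<le> \<kappa>"
proof -
  define \<eta> where "\<eta> = \<kappa> / (real (card (sym_gens G SG)) + 1)"
  have \<eta>: "\<eta> > 0" "real (card (sym_gens G SG)) * \<eta> \<le> \<kappa>"
    using \<kappa> unfolding \<eta>_def by (simp_all add: field_simps)
  have "filterlim (\<lambda>n. \<delta> / 2 * real n powr (1 / p)) at_top sequentially"
    using p \<delta> by (intro filterlim_tendsto_pos_mult_at_top[OF tendsto_const]
        filterlim_compose[OF real_powr_at_top filterlim_real_sequentially]) auto
  then have large: "\<forall>\<^sub>F n in sequentially. 1 \<le> \<delta> / 2 * real n powr (1 / p)"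
    unfolding filterlim_at_top by (rule spec)
  have half: "\<delta> / 2 > 0"
    using \<delta> by simp
  have tails: "\<forall>\<^sub>F n in sequentially. \<forall>s\<in>sym_gens G SG. \<forall>N. \<delta> / 2 * real n powr (1 / p) \<le> real N \<longrightarrow>
      real n * tail_mass MXL (\<lambda>x. word_len L S (coc s x)) N \<le> \<eta>"
    by (rule eventually_cocycle_tail_mass_small[OF SG S p moment half \<eta>(1)])
  from large tails show ?thesis
  proof eventually_elim
    case (elim n)
    define N where "N = nat \<lceil>\<delta> / 2 * real n powr (1 / p)\<rceil>"
    have N: "\<delta> / 2 * real n powr (1 / p) \<le> real N" "real N \<le> \<delta> * real n powr (1 / p)" "N > 0"
      using elim(1) of_int_ceiling_le_add_one[of "\<delta> / 2 * real n powr (1 / p)"] unfolding N_def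
      by linarith+
    show ?case
    proof (intro ballI impI)
      fix g assume g: "g \<in> carrier G" "word_len G SG g \<le> n"
      have "measure M {x \<in> XL. coc g x \<notin> {l \<in> carrier L. real (word_len L S l) \<le> \<delta> * real n powr (1 / p)}}
          \<le> real (card (sym_gens G SG)) * \<eta>"
        using elim(2) N(1) by (intro measure_cocycle_outside_ball_le[OF SG S g N(3,2)]) auto
      then show "measure M {x \<in> XL. coc g x \<notin> {l \<in> carrier L. real (word_len L S l) \<le> \<delta> * real n powr (1 / p)}}
          \<le> \<kappa>"
        using \<eta>(2) by linarith
    qed
  qed
qed

lemma growth_le_rescaled_growth:
  assumes SG: "fin_gen_set G SG" and S: "fin_gen_set L S" and p: "0 < p" "p < 1"
    and moment: "\<And>g. g \<in> carrier G \<Longrightarrow> (\<integral>\<^sup>+ x. ennreal (real (word_len L S (coc g x)) powr p) \<partial>MXL) < \<infinity>"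
  obtains Q where "Q > 0"
    "\<And>\<delta>. \<delta> > 0 \<Longrightarrow> \<forall>\<^sub>F n in sequentially. growth G SG (real n) \<le> Q * growth L S (\<delta> * real n powr (1 / p))"
proof -
  obtain \<kappa> where \<kappa>: "\<kappa> > 0"
    "\<And>F E. finite F \<Longrightarrow> F \<subseteq> carrier G \<Longrightarrow> finite E \<Longrightarrow> E \<subseteq> carrier L \<Longrightarrow>
       (\<And>g. g \<in> F \<Longrightarrow> measure M {x \<in> XL. coc g x \<notin> E} \<le> \<kappa>) \<Longrightarrow>
       real (card F) \<le> measure M XL / \<kappa> * real (card E)"
    using exists_card_bound by blast
  have "measure M XL > 0"
    using emeasure_XL_pos fmeasurable_subset_XL[OF XL_sets order.refl] by (simp add: emeasure_eq_measure2)
  then have Q_pos: "measure M XL / \<kappa> > 0"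
    using \<kappa>(1) by simp
  show ?thesis
  proof (rule that[OF Q_pos])
    fix \<delta> :: real assume \<delta>: "\<delta> > 0"
    have "\<forall>\<^sub>F n in sequentially. \<forall>g\<in>carrier G. word_len G SG g \<le> n \<longrightarrow>
        measure M {x \<in> XL. coc g x \<notin> {l \<in> carrier L. real (word_len L S l) \<le> \<delta> * real n powr (1 / p)}} \<le> \<kappa>"
      by (rule eventually_cocycle_concentrated_on_balls[OF SG S p moment \<delta> \<kappa>(1)])
    then show "\<forall>\<^sub>F n in sequentially. growth G SG (real n) \<le> measure M XL / \<kappa> * growth L S (\<delta> * real n powr (1 / p))"
    proof eventually_elim
      case (elim n)
      define F where "F = {g \<in> carrier G. real (word_len G SG g) \<le> real n}"
      define E where "E = {l \<in> carrier L. real (word_len L S l) \<le> \<delta> * real n powr (1 / p)}"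
      have "real (card F) \<le> measure M XL / \<kappa> * real (card E)"
      proof (rule \<kappa>(2))
        show "finite F" "finite E"
          unfolding F_def E_def by (rule G.finite_word_ball[OF SG], rule L.finite_word_ball[OF S])
        show "F \<subseteq> carrier G" "E \<subseteq> carrier L"
          unfolding F_def E_def by auto
        show "measure M {x \<in> XL. coc g x \<notin> E} \<le> \<kappa>" if "g \<in> F" for g
          using elim that unfolding F_def E_def by simp
      qed
      then show ?case
        unfolding F_def E_def growth_def .
    qed
  qed
qed

lemma growth_gap_contradiction:
  assumes G_deg: "poly_growth_deg G b" and L_deg: "poly_growth_deg L a" and ab: "a < b"
    and S: "fin_gen_set L S"
    and Lp: "\<And>g. g \<in> carrier G \<Longrightarrow> in_Lp MXL (a / b) (\<lambda>x. real (word_len L S (coc g x)))"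
  shows False
proof -
  obtain SG \<kappa> where SG: "fin_gen_set G SG" "\<kappa> > 0"
    and lower: "\<forall>\<^sub>F n in sequentially. \<kappa> * real n powr b \<le> growth G SG (real n)"
    using poly_growth_deg_lower_bound[OF G_deg] by blast
  consider "a = 0" | "a > 0"
    using poly_growth_deg_nonneg[OF group_L L_deg] by linarith
  then show False
  proof cases
    case 1
    then have "finite (carrier G)"
      using poly_growth_deg_zero_imp_finite[OF group_L] L_deg finite_carrier_G_if_finite_carrier_L by simp
    moreover have "infinite (carrier G)"
      using poly_growth_deg_pos_imp_infinite[OF G_deg] ab 1 by simp
    ultimately show False
      by simp
  next
    case 2
    obtain K R where K: "K > 0" "\<And>r. r \<ge> R \<Longrightarrow> growth L S r \<le> K * r powr a"
      using poly_growth_deg_upper_bound[OF group_L L_deg S] by blast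
    have p: "0 < a / b" "a / b < 1"
      using 2 ab by simp_all
    have moment: "(\<integral>\<^sup>+ x. ennreal (real (word_len L S (coc g x)) powr (a / b)) \<partial>MXL) < \<infinity>"
      if "g \<in> carrier G" for g
      using Lp[OF that] p(1) unfolding in_Lp_def by simp
    obtain Q where Q: "Q > 0"
      "\<And>\<delta>. \<delta> > 0 \<Longrightarrow> \<forall>\<^sub>F n in sequentially. growth G SG (real n) \<le> Q * growth L S (\<delta> * real n powr (1 / (a / b)))"
      using growth_le_rescaled_growth[OF SG(1) S p moment] by blast
    have dom: "\<forall>\<^sub>F n in sequentially. growth G SG (real n) \<le> Q * growth L S (\<delta> * real n powr (b / a))"
      if "\<delta> > 0" for \<delta>
      using Q(2)[OF that] by simp
    show False
      by (rule rescaled_polynomial_growth_contradiction[OF 2 ab SG(2) Q(1) K(1) lower K(2) dom])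
  qed
qed

end

theorem corollary4p3:
  fixes G :: "'a monoid" and L :: "'b monoid" and a b :: real and S :: "'b set"
  assumes "group G" and "group L"
    and "poly_growth_deg G b" and "poly_growth_deg L a" and "b > a"
    and "fin_gen_set L S"
  shows "\<not> (\<exists>(M :: 'w measure) aG aL XG XL. Lp_L0_coupling G L S (a / b) M aG aL XG XL)"
proof
  assume "\<exists>(M :: 'w measure) aG aL XG XL. Lp_L0_coupling G L S (a / b) M aG aL XG XL"
  then obtain M :: "'w measure" and aG aL XG XL where coupling: "me_coupling G L M aG aL XG XL"
    and Lp: "\<And>g. g \<in> carrier G \<Longrightarrow>
      in_Lp (restrict_space M XL) (a / b) (\<lambda>x. real (word_len L S (cocycle L aL aG XL g x)))"
    unfolding Lp_L0_coupling_def by blast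
  obtain SG where "fin_gen_set G SG"
    using assms(3) unfolding poly_growth_deg_def by blast
  then interpret countable_me_coupling G L M aG aL XG XL
    using assms(1,2,6) coupling by (intro countable_me_coupling.intro group.countable_carrier)
  show False
    using growth_gap_contradiction[OF assms(3,4,5,6) Lp] .
qed

end
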